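(* Let $(A,\Delta)$ and $(B,\Delta)$ be regular multiplier Hopf algebras forming a non-degenerate dual pair and let $R$ be a left $A$-module algebra. Then the map $B\otimes (R\# A)\to R\# A$, $b\otimes (x\# a)\mapsto x\#(b\triangleright a)=\sum\langle a_{(2)},b\rangle\, x\# a_{(1)}$ makes the smash product $R\# A$ into a left $B$-module algebra.
   Context: Algebras are over $\mathbb C$, possibly without identity, with non-degenerate product; $M(\cdot)$ is the multiplier algebra. A regular multiplier Hopf algebra is a pair $(A,\Delta)$ with $\Delta:A\to M(A\otimes A)$ a coassociative homomorphism such that $\Delta(a)(1\otimes b),(a\otimes 1)\Delta(b),\Delta(a)(b\otimes 1),(1\otimes a)\Delta(b)\in A\otimes A$, the maps $a\otimes b\mapsto\Delta(a)(1\otimes b)$, $a\otimes b\mapsto(a\otimes 1)\Delta(b)$ are bijective, and likewise for the flipped comultiplication; it has counit $\varepsilon$ and bijective antipode $S$; Sweedler notation is used with legs covered. A non-degenerate dual pair: a non-degenerate bilinear form $\langle\cdot,\cdot\rangle:A\times B\to\mathbb C$ such that for all $a\in A,b\in B$ the multipliers $b\triangleright a=\sum\langle a_{(2)},b\rangle a_{(1)}$ and $a\triangleleft b=\sum\langle a_{(1)},b\rangle a_{(2)}$ lie in $A$, $a\triangleright b=\sum\langle a,b_{(2)}\rangle b_{(1)}$ and $b\triangleleft a=\sum\langle a,b_{(1)}\rangle b_{(2)}$ lie in $B$, with $\langle b\triangleright a,b'\rangle=\langle a,b'b\rangle$, $\langle a\triangleleft b,b'\rangle=\langle a,bb'\rangle$,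 $\langle a',a\triangleright b\rangle=\langle a'a,b\rangle$, $\langle a',b\triangleleft a\rangle=\langle aa',b\rangle$, and these four actions are unital. A left $A$-module $R$ is unital if $AR=R$. A left $A$-module algebra is an algebra $R$ with non-degenerate product which is a unital left $A$-module satisfying $a(xx')=\sum(a_{(1)}x)(a_{(2)}x')$ for $a\in A$, $x,x'\in R$. The smash product $R\# A$ is $R\otimes A$ (elements $x\# a$) with product $(x\# a)(x'\# a')=\sum x(a_{(1)}x')\# a_{(2)}a'$. *)

theory Defs
  imports Complex_Main
begin

section \<open>Complex vector spaces and algebras (possibly without unit)\<close>

class cvec = ab_group_add +
  fixes cscale :: "complex \<Rightarrow> 'a \<Rightarrow> 'a"
  assumes cscale_add_right: "cscale c (x + y) = cscale c x + cscale c y"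
    and cscale_add_left: "cscale (c + d) x = cscale c x + cscale d x"
    and cscale_cscale: "cscale c (cscale d x) = cscale (c * d) x"
    and cscale_one: "cscale 1 x = x"

instantiation complex :: cvec
begin
definition cscale_complex :: "complex \<Rightarrow> complex \<Rightarrow> complex" where
  "cscale_complex c z = c * z"
instance by standard (auto simp: cscale_complex_def algebra_simps)
end

definition clinear :: "('a::cvec \<Rightarrow> 'b::cvec) \<Rightarrow> bool" where
  "clinear f \<longleftrightarrow> (\<forall>x y. f (x + y) = f x + f y) \<and> (\<forall>c x. f (cscale c x) = cscale c (f x))"

definition cbilinear :: "('a::cvec \<Rightarrow> 'b::cvec \<Rightarrow> 'c::cvec) \<Rightarrow> bool" where
  "cbilinear F \<longleftrightarrow> (\<forall>x. clinear (F x)) \<and> (\<forall>y. clinear (\<lambda>x. F x y))"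

definition is_alg :: "('a::cvec \<Rightarrow> 'a \<Rightarrow> 'a) \<Rightarrow> bool" where
  "is_alg m \<longleftrightarrow> cbilinear m \<and> (\<forall>x y z. m (m x y) z = m x (m y z))"

definition nondeg :: "('a::cvec \<Rightarrow> 'a \<Rightarrow> 'a) \<Rightarrow> bool" where
  "nondeg m \<longleftrightarrow> (\<forall>x. (\<forall>y. m x y = 0) \<longrightarrow> x = 0) \<and> (\<forall>x. (\<forall>y. m y x = 0) \<longrightarrow> x = 0)"

section \<open>Algebraic tensor product V \<otimes> W\<close>

text \<open>An element \<open>\<Sum> v_i \<otimes> w_i\<close> is represented faithfully by the bilinear form
  \<open>(f,g) \<mapsto> \<Sum> f(v_i) g(w_i)\<close> on pairs of linear functionals (these separate V \<otimes> W).\<close>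

definition tfun :: "('a::cvec \<times> 'b::cvec) list \<Rightarrow> ('a \<Rightarrow> complex) \<times> ('b \<Rightarrow> complex) \<Rightarrow> complex" where
  "tfun xs = (\<lambda>(f, g). if clinear f \<and> clinear g then (\<Sum>(v, w)\<leftarrow>xs. f v * g w) else 0)"

typedef (overloaded) ('a::cvec, 'b::cvec) tensor = "range (tfun :: ('a \<times> 'b) list \<Rightarrow> _)"
  by auto

setup_lifting type_definition_tensor

lemma clinear_neg: "clinear f \<Longrightarrow> f (- x) = - f x"
  unfolding clinear_def by (metis add_right_cancel add.left_inverse add.right_neutral add.left_neutral
      diff_0 diff_add_cancel eq_neg_iff_add_eq_0)

lemma tfun_append: "tfun (xs @ ys) = (\<lambda>p. tfun xs p + tfun ys p)"
  by (auto simp: tfun_def fun_eq_iff)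

lemma tfun_neg: "tfun (map (\<lambda>(v, w). (- v, w)) xs) = (\<lambda>p. - tfun xs p)"
proof -
  have "clinear f \<Longrightarrow> (\<Sum>(v, w)\<leftarrow>map (\<lambda>(v, w). (- v, w)) xs. f v * g w) = - (\<Sum>(v, w)\<leftarrow>xs. f v * g w)"
    for f :: "'a \<Rightarrow> complex" and g :: "'b \<Rightarrow> complex"
    by (induction xs) (auto simp: clinear_neg)
  then show ?thesis by (auto simp: tfun_def fun_eq_iff)
qed

lemma tfun_scale: "tfun (map (\<lambda>(v, w). (cscale c v, w)) xs) = (\<lambda>p. c * tfun xs p)"
proof -
  have "clinear f \<Longrightarrow> (\<Sum>(v, w)\<leftarrow>map (\<lambda>(v, w). (cscale c v, w)) xs. f v * g w) = c * (\<Sum>(v, w)\<leftarrow>xs. f v * g w)"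
    for f :: "'a \<Rightarrow> complex" and g :: "'b \<Rightarrow> complex"
    by (induction xs) (auto simp: clinear_def cscale_complex_def algebra_simps)
  then show ?thesis by (auto simp: tfun_def fun_eq_iff)
qed

instantiation tensor :: (cvec, cvec) cvec
begin
lift_definition zero_tensor :: "('a, 'b) tensor" is "tfun []" by auto
lift_definition plus_tensor :: "('a, 'b) tensor \<Rightarrow> ('a, 'b) tensor \<Rightarrow> ('a, 'b) tensor"
  is "\<lambda>\<phi> \<psi> p. \<phi> p + \<psi> p" by (auto simp flip: tfun_append)
lift_definition uminus_tensor :: "('a, 'b) tensor \<Rightarrow> ('a, 'b) tensor"
  is "\<lambda>\<phi> p. - \<phi> p" by (auto simp flip: tfun_neg)
lift_definition minus_tensor :: "('a, 'b) tensor \<Rightarrow> ('a, 'b) tensor \<Rightarrow> ('a, 'b) tensor"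
  is "\<lambda>\<phi> \<psi> p. \<phi> p - \<psi> p"
proof -
  fix \<phi> \<psi> :: "('a \<Rightarrow> complex) \<times> ('b \<Rightarrow> complex) \<Rightarrow> complex"
  assume "\<phi> \<in> range tfun" "\<psi> \<in> range tfun"
  then obtain xs ys where "\<phi> = tfun xs" "\<psi> = tfun ys" by auto
  then have "(\<lambda>p. \<phi> p - \<psi> p) = tfun (xs @ map (\<lambda>(v, w). (- v, w)) ys)"
    by (simp add: tfun_append tfun_neg)
  then show "(\<lambda>p. \<phi> p - \<psi> p) \<in> range tfun" by auto
qed
lift_definition cscale_tensor :: "complex \<Rightarrow> ('a, 'b) tensor \<Rightarrow> ('a, 'b) tensor"
  is "\<lambda>c \<phi> p. c * \<phi> p" by (auto simp flip: tfun_scale)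
instance
proof
  have z: "tfun [] = (\<lambda>p. 0)" by (auto simp: tfun_def)
  show "a + b + c = a + (b + c)" for a b c :: "('a, 'b) tensor"
    by transfer (simp add: add.assoc)
  show "a + b = b + a" for a b :: "('a, 'b) tensor"
    by transfer (simp add: add.commute)
  show "0 + a = a" for a :: "('a, 'b) tensor"
    by transfer (simp add: z)
  show "- a + a = 0" for a :: "('a, 'b) tensor"
    by transfer (simp add: z)
  show "a - b = a + - b" for a b :: "('a, 'b) tensor"
    by transfer simp
  show "cscale c (x + y) = cscale c x + cscale c y" for c and x y :: "('a, 'b) tensor"
    by transfer (simp add: algebra_simps)
  show "cscale (c + d) x = cscale c x + cscale d x" for c d and x :: "('a, 'b) tensor"
    by transfer (simp add: algebra_simps)
  show "cscale c (cscale d x) = cscale (c * d) x" for c d and x :: "('a, 'b) tensor"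
    by transfer (simp add: algebra_simps)
  show "cscale 1 x = x" for x :: "('a, 'b) tensor"
    by transfer simp
qed
end

lift_definition tprod :: "'a::cvec \<Rightarrow> 'b::cvec \<Rightarrow> ('a, 'b) tensor" is "\<lambda>v w. tfun [(v, w)]"
  by auto

text \<open>A chosen representation \<open>t = \<Sum> v_i \<otimes> w_i\<close>, and the induced linear map
  \<open>v \<otimes> w \<mapsto> F v w\<close> for a bilinear \<open>F\<close> (independent of the representation when \<open>F\<close> is bilinear).\<close>
definition trep :: "('a::cvec, 'b::cvec) tensor \<Rightarrow> ('a \<times> 'b) list" where
  "trep t = (SOME xs. Rep_tensor t = tfun xs)"

definition tapply :: "('a::cvec \<Rightarrow> 'b::cvec \<Rightarrow> 'c::cvec) \<Rightarrow> ('a, 'b) tensor \<Rightarrow> 'c" where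
  "tapply F t = (\<Sum>(v, w)\<leftarrow>trep t. F v w)"

definition tflip :: "('a::cvec, 'b::cvec) tensor \<Rightarrow> ('b, 'a) tensor" where
  "tflip = tapply (\<lambda>v w. tprod w v)"

definition tassoc :: "('a::cvec, ('b::cvec, 'c::cvec) tensor) tensor \<Rightarrow> (('a, 'b) tensor, 'c) tensor" where
  "tassoc = tapply (\<lambda>u s. tapply (\<lambda>v w. tprod (tprod u v) w) s)"

definition tmul :: "('a::cvec \<Rightarrow> 'a \<Rightarrow> 'a) \<Rightarrow> ('b::cvec \<Rightarrow> 'b \<Rightarrow> 'b)
    \<Rightarrow> ('a, 'b) tensor \<Rightarrow> ('a, 'b) tensor \<Rightarrow> ('a, 'b) tensor" where
  "tmul m1 m2 s t = tapply (\<lambda>v w. tapply (\<lambda>v' w'. tprod (m1 v v') (m2 w w')) t) s"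

section \<open>Multipliers\<close>

text \<open>A multiplier of an algebra \<open>(X, m)\<close> is a pair \<open>(L, R)\<close>, \<open>L x = M x\<close>, \<open>R x = x M\<close>.\<close>
type_synonym 'x multiplier = "('x \<Rightarrow> 'x) \<times> ('x \<Rightarrow> 'x)"

definition is_multiplier :: "('x::cvec \<Rightarrow> 'x \<Rightarrow> 'x) \<Rightarrow> 'x multiplier \<Rightarrow> bool" where
  "is_multiplier m M \<longleftrightarrow> (\<forall>x y. fst M (m x y) = m (fst M x) y \<and> snd M (m x y) = m x (snd M y)
      \<and> m x (fst M y) = m (snd M x) y)"

definition mult_of :: "('x \<Rightarrow> 'x \<Rightarrow> 'x) \<Rightarrow> 'x \<Rightarrow> 'x multiplier" where
  "mult_of m t = (m t, \<lambda>x. m x t)"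

definition mcomp :: "'x multiplier \<Rightarrow> 'x multiplier \<Rightarrow> 'x multiplier" where
  "mcomp M N = (fst M \<circ> fst N, snd N \<circ> snd M)"

definition madd :: "'x::plus multiplier \<Rightarrow> 'x multiplier \<Rightarrow> 'x multiplier" where
  "madd M N = ((\<lambda>x. fst M x + fst N x), (\<lambda>x. snd M x + snd N x))"

definition mscale :: "complex \<Rightarrow> 'x::cvec multiplier \<Rightarrow> 'x multiplier" where
  "mscale c M = ((\<lambda>x. cscale c (fst M x)), (\<lambda>x. cscale c (snd M x)))"

definition in_alg :: "('x \<Rightarrow> 'x \<Rightarrow> 'x) \<Rightarrow> 'x multiplier \<Rightarrow> bool" where
  "in_alg m M \<longleftrightarrow> (\<exists>t. M = mult_of m t)"

definition elem_of :: "('x \<Rightarrow> 'x \<Rightarrow> 'x) \<Rightarrow> 'x multiplier \<Rightarrow> 'x" where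
  "elem_of m M = (SOME t. M = mult_of m t)"

section \<open>Regular multiplier Hopf algebras\<close>

type_synonym 'a comult = "'a \<Rightarrow> ('a, 'a) tensor multiplier"

definition one_ten :: "('a::cvec \<Rightarrow> 'a \<Rightarrow> 'a) \<Rightarrow> 'a \<Rightarrow> ('a, 'a) tensor multiplier" where
  "one_ten m b = (tapply (\<lambda>p q. tprod p (m b q)), tapply (\<lambda>p q. tprod p (m q b)))"

definition ten_one :: "('a::cvec \<Rightarrow> 'a \<Rightarrow> 'a) \<Rightarrow> 'a \<Rightarrow> ('a, 'a) tensor multiplier" where
  "ten_one m b = (tapply (\<lambda>p q. tprod (m b p) q), tapply (\<lambda>p q. tprod (m p b) q))"

text \<open>The four covered products (as multipliers of \<open>A \<otimes> A\<close>):
  \<open>\<Delta>(a)(1\<otimes>b)\<close>, \<open>(a\<otimes>1)\<Delta>(b)\<close>, \<open>\<Delta>(a)(b\<otimes>1)\<close>, \<open>(1\<otimes>a)\<Delta>(b)\<close>.\<close>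
definition M1 :: "('a::cvec \<Rightarrow> 'a \<Rightarrow> 'a) \<Rightarrow> 'a comult \<Rightarrow> 'a \<Rightarrow> 'a \<Rightarrow> ('a, 'a) tensor multiplier" where
  "M1 m \<Delta> a b = mcomp (\<Delta> a) (one_ten m b)"
definition M2 :: "('a::cvec \<Rightarrow> 'a \<Rightarrow> 'a) \<Rightarrow> 'a comult \<Rightarrow> 'a \<Rightarrow> 'a \<Rightarrow> ('a, 'a) tensor multiplier" where
  "M2 m \<Delta> a b = mcomp (ten_one m a) (\<Delta> b)"
definition M3 :: "('a::cvec \<Rightarrow> 'a \<Rightarrow> 'a) \<Rightarrow> 'a comult \<Rightarrow> 'a \<Rightarrow> 'a \<Rightarrow> ('a, 'a) tensor multiplier" where
  "M3 m \<Delta> a b = mcomp (\<Delta> a) (ten_one m b)"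
definition M4 :: "('a::cvec \<Rightarrow> 'a \<Rightarrow> 'a) \<Rightarrow> 'a comult \<Rightarrow> 'a \<Rightarrow> 'a \<Rightarrow> ('a, 'a) tensor multiplier" where
  "M4 m \<Delta> a b = mcomp (one_ten m a) (\<Delta> b)"

text \<open>The corresponding elements of \<open>A \<otimes> A\<close> (meaningful when the multipliers lie in \<open>A \<otimes> A\<close>).\<close>
definition cov1 :: "('a::cvec \<Rightarrow> 'a \<Rightarrow> 'a) \<Rightarrow> 'a comult \<Rightarrow> 'a \<Rightarrow> 'a \<Rightarrow> ('a, 'a) tensor" where
  "cov1 m \<Delta> a b = elem_of (tmul m m) (M1 m \<Delta> a b)"
definition cov2 :: "('a::cvec \<Rightarrow> 'a \<Rightarrow> 'a) \<Rightarrow> 'a comult \<Rightarrow> 'a \<Rightarrow> 'a \<Rightarrow> ('a, 'a) tensor" where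
  "cov2 m \<Delta> a b = elem_of (tmul m m) (M2 m \<Delta> a b)"
definition cov3 :: "('a::cvec \<Rightarrow> 'a \<Rightarrow> 'a) \<Rightarrow> 'a comult \<Rightarrow> 'a \<Rightarrow> 'a \<Rightarrow> ('a, 'a) tensor" where
  "cov3 m \<Delta> a b = elem_of (tmul m m) (M3 m \<Delta> a b)"
definition cov4 :: "('a::cvec \<Rightarrow> 'a \<Rightarrow> 'a) \<Rightarrow> 'a comult \<Rightarrow> 'a \<Rightarrow> 'a \<Rightarrow> ('a, 'a) tensor" where
  "cov4 m \<Delta> a b = elem_of (tmul m m) (M4 m \<Delta> a b)"

definition regular_mha :: "('a::cvec \<Rightarrow> 'a \<Rightarrow> 'a) \<Rightarrow> 'a comult \<Rightarrow> bool" where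
  "regular_mha m \<Delta> \<longleftrightarrow>
     is_alg m \<and> nondeg m
   \<comment> \<open>\<open>\<Delta> : A \<rightarrow> M(A \<otimes> A)\<close> is a homomorphism\<close>
   \<and> (\<forall>a. is_multiplier (tmul m m) (\<Delta> a))
   \<and> (\<forall>a b. \<Delta> (a + b) = madd (\<Delta> a) (\<Delta> b))
   \<and> (\<forall>c a. \<Delta> (cscale c a) = mscale c (\<Delta> a))
   \<and> (\<forall>a b. \<Delta> (m a b) = mcomp (\<Delta> a) (\<Delta> b))
   \<comment> \<open>covered products lie in \<open>A \<otimes> A\<close>\<close>
   \<and> (\<forall>a b. in_alg (tmul m m) (M1 m \<Delta> a b) \<and> in_alg (tmul m m) (M2 m \<Delta> a b)
          \<and> in_alg (tmul m m) (M3 m \<Delta> a b) \<and> in_alg (tmul m m) (M4 m \<Delta> a b))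
   \<comment> \<open>coassociativity: \<open>(a\<otimes>1\<otimes>1)(\<Delta>\<otimes>\<iota>)(\<Delta>(b)(1\<otimes>c)) = (\<iota>\<otimes>\<Delta>)((a\<otimes>1)\<Delta>(b))(1\<otimes>1\<otimes>c)\<close>\<close>
   \<and> (\<forall>a b c. tapply (\<lambda>p q. tprod (cov2 m \<Delta> a p) q) (cov1 m \<Delta> b c)
             = tassoc (tapply (\<lambda>u v. tprod u (cov1 m \<Delta> v c)) (cov2 m \<Delta> a b)))
   \<comment> \<open>bijectivity of \<open>a\<otimes>b \<mapsto> \<Delta>(a)(1\<otimes>b)\<close>, \<open>a\<otimes>b \<mapsto> (a\<otimes>1)\<Delta>(b)\<close>\<close>
   \<and> bij (tapply (cov1 m \<Delta>)) \<and> bij (tapply (cov2 m \<Delta>))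
   \<comment> \<open>same for \<open>\<Delta>^cop = \<sigma>\<Delta>\<close>: \<open>\<Delta>^cop(a)(1\<otimes>b) = \<sigma>(\<Delta>(a)(b\<otimes>1))\<close>, \<open>(a\<otimes>1)\<Delta>^cop(b) = \<sigma>((1\<otimes>a)\<Delta>(b))\<close>\<close>
   \<and> bij (tapply (\<lambda>a b. tflip (cov3 m \<Delta> a b))) \<and> bij (tapply (\<lambda>a b. tflip (cov4 m \<Delta> a b)))"

section \<open>Modules and module algebras\<close>

definition left_module :: "('a::cvec \<Rightarrow> 'a \<Rightarrow> 'a) \<Rightarrow> ('a \<Rightarrow> 'r::cvec \<Rightarrow> 'r) \<Rightarrow> bool" where
  "left_module m act \<longleftrightarrow> cbilinear act \<and> (\<forall>a a' x. act (m a a') x = act a (act a' x))"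

definition unital_action :: "('a \<Rightarrow> 'r::cvec \<Rightarrow> 'r) \<Rightarrow> bool" where
  "unital_action act \<longleftrightarrow> (\<forall>x. \<exists>ps. x = (\<Sum>(a, y)\<leftarrow>ps. act a y))"

text \<open>Left module algebra; \<open>a(xx') = \<Sum>(a_(1)x)(a_(2)x')\<close> with legs covered by writing
  \<open>x' = \<Sum> c_j y_j\<close> and using \<open>\<Delta>(a)(1\<otimes>c_j) \<in> A \<otimes> A\<close>.\<close>
definition module_algebra :: "('a::cvec \<Rightarrow> 'a \<Rightarrow> 'a) \<Rightarrow> 'a comult
    \<Rightarrow> ('r::cvec \<Rightarrow> 'r \<Rightarrow> 'r) \<Rightarrow> ('a \<Rightarrow> 'r \<Rightarrow> 'r) \<Rightarrow> bool" where
  "module_algebra m \<Delta> mR act \<longleftrightarrow>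
     is_alg mR \<and> nondeg mR \<and> left_module m act \<and> unital_action act
   \<and> (\<forall>a x cs. act a (mR x (\<Sum>(c, y)\<leftarrow>cs. act c y))
        = (\<Sum>(c, y)\<leftarrow>cs. tapply (\<lambda>p q. mR (act p x) (act q y)) (cov1 m \<Delta> a c)))"

section \<open>Dual pairs\<close>

text \<open>\<open>b \<triangleright> a = \<Sum>\<langle>a_(2),b\<rangle>a_(1)\<close> as a multiplier of A: \<open>(b\<triangleright>a)c\<close> computed from \<open>\<Delta>(a)(c\<otimes>1)\<close>,
  \<open>c(b\<triangleright>a)\<close> from \<open>(c\<otimes>1)\<Delta>(a)\<close>.\<close>
definition ractM :: "('a::cvec \<Rightarrow> 'a \<Rightarrow> 'a) \<Rightarrow> 'a comult \<Rightarrow> ('a \<Rightarrow> 'b \<Rightarrow> complex)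
    \<Rightarrow> 'b \<Rightarrow> 'a \<Rightarrow> 'a multiplier" where
  "ractM m \<Delta> pr b a = (\<lambda>c. tapply (\<lambda>p q. cscale (pr q b) p) (cov3 m \<Delta> a c),
                       \<lambda>c. tapply (\<lambda>p q. cscale (pr q b) p) (cov2 m \<Delta> c a))"

text \<open>\<open>a \<triangleleft> b = \<Sum>\<langle>a_(1),b\<rangle>a_(2)\<close>: from \<open>\<Delta>(a)(1\<otimes>c)\<close> and \<open>(1\<otimes>c)\<Delta>(a)\<close>.\<close>
definition lactM :: "('a::cvec \<Rightarrow> 'a \<Rightarrow> 'a) \<Rightarrow> 'a comult \<Rightarrow> ('a \<Rightarrow> 'b \<Rightarrow> complex)
    \<Rightarrow> 'a \<Rightarrow> 'b \<Rightarrow> 'a multiplier" where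
  "lactM m \<Delta> pr a b = (\<lambda>c. tapply (\<lambda>p q. cscale (pr p b) q) (cov1 m \<Delta> a c),
                       \<lambda>c. tapply (\<lambda>p q. cscale (pr p b) q) (cov4 m \<Delta> c a))"

definition tri_BA :: "('a::cvec \<Rightarrow> 'a \<Rightarrow> 'a) \<Rightarrow> 'a comult \<Rightarrow> ('a \<Rightarrow> 'b \<Rightarrow> complex) \<Rightarrow> 'b \<Rightarrow> 'a \<Rightarrow> 'a"
  where "tri_BA mA \<Delta>A pr b a = elem_of mA (ractM mA \<Delta>A pr b a)"
definition tle_AB :: "('a::cvec \<Rightarrow> 'a \<Rightarrow> 'a) \<Rightarrow> 'a comult \<Rightarrow> ('a \<Rightarrow> 'b \<Rightarrow> complex) \<Rightarrow> 'a \<Rightarrow> 'b \<Rightarrow> 'a"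
  where "tle_AB mA \<Delta>A pr a b = elem_of mA (lactM mA \<Delta>A pr a b)"
definition tri_AB :: "('b::cvec \<Rightarrow> 'b \<Rightarrow> 'b) \<Rightarrow> 'b comult \<Rightarrow> ('a \<Rightarrow> 'b \<Rightarrow> complex) \<Rightarrow> 'a \<Rightarrow> 'b \<Rightarrow> 'b"
  where "tri_AB mB \<Delta>B pr a b = elem_of mB (ractM mB \<Delta>B (\<lambda>x y. pr y x) a b)"   \<comment> \<open>\<open>a \<triangleright> b = \<Sum>\<langle>a,b_(2)\<rangle>b_(1)\<close>\<close>
definition tle_BA :: "('b::cvec \<Rightarrow> 'b \<Rightarrow> 'b) \<Rightarrow> 'b comult \<Rightarrow> ('a \<Rightarrow> 'b \<Rightarrow> complex) \<Rightarrow> 'b \<Rightarrow> 'a \<Rightarrow> 'b"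
  where "tle_BA mB \<Delta>B pr b a = elem_of mB (lactM mB \<Delta>B (\<lambda>x y. pr y x) b a)"   \<comment> \<open>\<open>b \<triangleleft> a = \<Sum>\<langle>a,b_(1)\<rangle>b_(2)\<close>\<close>

definition dual_pair :: "('a::cvec \<Rightarrow> 'a \<Rightarrow> 'a) \<Rightarrow> 'a comult \<Rightarrow> ('b::cvec \<Rightarrow> 'b \<Rightarrow> 'b) \<Rightarrow> 'b comult
    \<Rightarrow> ('a \<Rightarrow> 'b \<Rightarrow> complex) \<Rightarrow> bool" where
  "dual_pair mA \<Delta>A mB \<Delta>B pr \<longleftrightarrow>
     cbilinear pr
   \<and> (\<forall>a. (\<forall>b. pr a b = 0) \<longrightarrow> a = 0) \<and> (\<forall>b. (\<forall>a. pr a b = 0) \<longrightarrow> b = 0)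
   \<and> (\<forall>a b. in_alg mA (ractM mA \<Delta>A pr b a) \<and> in_alg mA (lactM mA \<Delta>A pr a b)
          \<and> in_alg mB (ractM mB \<Delta>B (\<lambda>x y. pr y x) a b) \<and> in_alg mB (lactM mB \<Delta>B (\<lambda>x y. pr y x) b a))
   \<and> (\<forall>a b b'. pr (tri_BA mA \<Delta>A pr b a) b' = pr a (mB b' b))
   \<and> (\<forall>a b b'. pr (tle_AB mA \<Delta>A pr a b) b' = pr a (mB b b'))
   \<and> (\<forall>a a' b. pr a' (tri_AB mB \<Delta>B pr a b) = pr (mA a' a) b)
   \<and> (\<forall>a a' b. pr a' (tle_BA mB \<Delta>B pr b a) = pr (mA a a') b)
   \<and> unital_action (tri_BA mA \<Delta>A pr) \<and> unital_action (\<lambda>b a. tle_AB mA \<Delta>A pr a b)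
   \<and> unital_action (tri_AB mB \<Delta>B pr) \<and> unital_action (\<lambda>a b. tle_BA mB \<Delta>B pr b a)"

section \<open>Smash product\<close>

text \<open>\<open>(x#a)(x'#a') = \<Sum> x(a_(1)x') # a_(2)a'\<close>, covered via \<open>\<Delta>(a)(1\<otimes>a')\<close>, extended bilinearly.\<close>
definition smash_mult :: "('a::cvec \<Rightarrow> 'a \<Rightarrow> 'a) \<Rightarrow> 'a comult \<Rightarrow> ('r::cvec \<Rightarrow> 'r \<Rightarrow> 'r)
    \<Rightarrow> ('a \<Rightarrow> 'r \<Rightarrow> 'r) \<Rightarrow> ('r, 'a) tensor \<Rightarrow> ('r, 'a) tensor \<Rightarrow> ('r, 'a) tensor" where
  "smash_mult mA \<Delta>A mR act X Y =
     tapply (\<lambda>x a. tapply (\<lambda>x' a'. tapply (\<lambda>p q. tprod (mR x (act p x')) q) (cov1 mA \<Delta>A a a')) Y) X"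

definition smash_act :: "('a::cvec \<Rightarrow> 'a \<Rightarrow> 'a) \<Rightarrow> 'a comult \<Rightarrow> ('a \<Rightarrow> 'b \<Rightarrow> complex)
    \<Rightarrow> 'b \<Rightarrow> ('r::cvec, 'a) tensor \<Rightarrow> ('r, 'a) tensor" where
  "smash_act mA \<Delta>A pr b X = tapply (\<lambda>x a. tprod x (tri_BA mA \<Delta>A pr b a)) X"

end

theory Submission
  imports Defs
begin

(*
  Since B acts on R # A through the A-leg only, the module algebra law for R # A reduces to
  the compatibility
    (\<iota> \<otimes> b\<triangleright>)(\<Delta>(a)(1 \<otimes> c\<triangleright>a')) = \<Sum> \<Delta>(b_(1)\<triangleright>a)(1 \<otimes> (b_(2)c)\<triangleright>a'),
  which is checked by pairing the second leg with B, using that the pairing turns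
  multiplication of B into comultiplication of A. Unitality of the B-action comes from that of
  b \<triangleright> a, and associativity of R # A from coassociativity and the module algebra law of R.

  Non-degeneracy of R # A is the substantial part. It needs the counit \<epsilon> and the map
  g \<otimes> c \<mapsto> S(g)c, both obtained from the bijectivity of T1(a \<otimes> b) = \<Delta>(a)(1 \<otimes> b) and
  T2(a \<otimes> b) = (a \<otimes> 1)\<Delta>(b) (the latter map as (\<epsilon> \<otimes> \<iota>) \<circ> T1\<inverse>, so the antipode itself is
  never constructed), together with non-degeneracy of the A-action on R, which follows from
  its unitality.
*)

section \<open>Complex vector spaces\<close>

interpretation cvs: vector_space "cscale :: complex \<Rightarrow> 'a::cvec \<Rightarrow> 'a"
  by unfold_locales (simp_all add: cscale_add_right cscale_add_left cscale_cscale cscale_one)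

declare cscale_one [simp]

lemma cscale_0r[simp]: "cscale c (0::'a::cvec) = 0" by (rule cvs.scale_zero_right)
lemma cscale_sum_list: "cscale c (sum_list (map f xs)::'a::cvec) = sum_list (map (\<lambda>x. cscale c (f x)) xs)"
  by (induction xs) (simp_all add: cscale_add_right)
lemma cscale_complex[simp]: "cscale c (z::complex) = c * z" by (simp add: cscale_complex_def)
lemma clinearI: "(\<And>x y. f (x + y) = f x + f y) \<Longrightarrow> (\<And>c x. f (cscale c x) = cscale c (f x)) \<Longrightarrow> clinear f"
  by (simp add: clinear_def)
lemma clinear_add: "clinear f \<Longrightarrow> f (x + y) = f x + f y" by (simp add: clinear_def)
lemma clinear_scale: "clinear f \<Longrightarrow> f (cscale c x) = cscale c (f x)" by (simp add: clinear_def)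
lemma clinear_linear: "clinear (f::'a::cvec \<Rightarrow> 'b::cvec) \<longleftrightarrow> Vector_Spaces.linear cscale cscale f"
  by (auto simp: clinear_def Vector_Spaces.linear_iff cvs.vector_space_axioms)

lemma clinear_0: "clinear f \<Longrightarrow> f 0 = 0"
proof -
  assume f: "clinear f"
  have "f (0+0) = f 0 + f 0" by (rule clinear_add[OF f])
  then show ?thesis by simp
qed

lemma clinear_diff: "clinear f \<Longrightarrow> f (x - y) = f x - f y"
  using clinear_add[of f x "-y"] clinear_neg[of f y] by simp
lemma clinear_sum_list: "clinear f \<Longrightarrow> f (sum_list (map g xs)) = sum_list (map (\<lambda>x. f (g x)) xs)"
  by (induction xs) (simp_all add: clinear_0 clinear_add)
lemma clinear_id[simp]: "clinear (\<lambda>x. x)" by (simp add: clinear_def)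
lemma clinear_comp: "clinear f \<Longrightarrow> clinear g \<Longrightarrow> clinear (\<lambda>x. f (g x))" by (simp add: clinear_def)
lemma clinear_fun_add: "clinear f \<Longrightarrow> clinear g \<Longrightarrow> clinear (\<lambda>x. f x + g x)"
  by (simp add: clinear_def cscale_add_right)
lemma clinear_fun_scale: "clinear f \<Longrightarrow> clinear (\<lambda>x. cscale c (f x))"
  by (simp add: clinear_def cscale_add_right cscale_cscale mult.commute)
lemma clinear_zero_fun[simp]: "clinear (\<lambda>x. 0)" by (simp add: clinear_def)
lemma clinear_scalar_mult: "clinear f \<Longrightarrow> clinear (\<lambda>x. cscale (f x) (v::'b::cvec))"
  by (simp add: clinear_def cscale_add_left cscale_cscale)
lemma clinear_sum_list_fun: "(\<And>x. x \<in> set xs \<Longrightarrow> clinear (g x)) \<Longrightarrow> clinear (\<lambda>v. sum_list (map (\<lambda>x. g x v) xs))"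
  by (induction xs) (auto intro!: clinear_fun_add)

lemma clinear_inverse:
  assumes L: "clinear L" and li: "\<And>x. L (Li x) = x" and il: "\<And>u. Li (L u) = u"
  shows "clinear Li"
proof (rule clinearI)
  fix x y
  have "Li (x + y) = Li (L (Li x) + L (Li y))" by (simp add: li)
  also have "\<dots> = Li x + Li y" by (simp add: clinear_add[OF L, symmetric] il)
  finally show "Li (x + y) = Li x + Li y" .
  fix c x
  have "Li (cscale c x) = Li (cscale c (L (Li x)))" by (simp add: li)
  also have "\<dots> = cscale c (Li x)" by (simp add: clinear_scale[OF L, symmetric] il)
  finally show "Li (cscale c x) = cscale c (Li x)" .
qed

lemma finite_coordinates:
  fixes S :: "'a::cvec set"
  assumes "finite S"
  shows "\<exists>ps. (\<forall>p\<in>set ps. clinear (fst p)) \<and> (\<forall>v\<in>S. v = (\<Sum>(f, e)\<leftarrow>ps. cscale (f v) e))"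
proof -
  interpret P: vector_space_pair "cscale :: complex \<Rightarrow> 'a \<Rightarrow> 'a" "cscale :: complex \<Rightarrow> complex \<Rightarrow> complex"
    by unfold_locales (simp_all add: cscale_add_right cscale_add_left cscale_cscale algebra_simps)
  interpret Q: vector_space_pair "cscale :: complex \<Rightarrow> 'a \<Rightarrow> 'a" "cscale :: complex \<Rightarrow> 'a \<Rightarrow> 'a"
    by unfold_locales
  obtain B where B: "B \<subseteq> S" "cvs.independent B" "S \<subseteq> cvs.span B"
    using cvs.maximal_independent_subset by blast
  have fB: "finite B" using B(1) assms finite_subset by blast
  define crd where "crd b = P.construct B (\<lambda>x. if x = b then 1 else 0)" for b
  have lin: "clinear (crd b)" for b
    unfolding crd_def clinear_linear using P.linear_construct[OF B(2)] by simp
  obtain bl where bl: "set bl = B" "distinct bl" using fB finite_distinct_list by blast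
  define ps where "ps = map (\<lambda>b. (crd b, b)) bl"
  have l2: "clinear (\<lambda>v. (\<Sum>(f, e)\<leftarrow>ps. cscale (f v) e))"
    unfolding ps_def map_map o_def split_beta fst_conv snd_conv
    by (rule clinear_sum_list_fun, rule clinear_scalar_mult, rule lin)
  have main: "v = (\<Sum>(f, e)\<leftarrow>ps. cscale (f v) e)" if "v \<in> cvs.span B" for v
  proof -
    have "(\<lambda>v. v) v = (\<lambda>v. (\<Sum>(f, e)\<leftarrow>ps. cscale (f v) e)) v"
    proof (rule Q.linear_eq_on[OF _ _ that])
      show "Vector_Spaces.linear cscale cscale (\<lambda>v::'a. v)" using clinear_linear clinear_id by blast
      show "Vector_Spaces.linear cscale cscale (\<lambda>v. (\<Sum>(f, e)\<leftarrow>ps. cscale (f v) e))"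
        using l2 clinear_linear by blast
      fix b assume b: "b \<in> B"
      have c: "crd b' b = (if b' = b then 1 else 0)" if "b' \<in> B" for b'
        unfolding crd_def using P.construct_basis[OF B(2) b] by auto
      have "(\<Sum>(f, e)\<leftarrow>ps. cscale (f b) e) = (\<Sum>b'\<leftarrow>bl. cscale (crd b' b) b')"
        by (simp add: ps_def o_def)
      also have "\<dots> = (\<Sum>b'\<in>B. cscale (crd b' b) b')"
        using bl by (simp add: sum_list_distinct_conv_sum_set)
      also have "\<dots> = (\<Sum>b'\<in>B. if b' = b then b else 0)"
        by (rule sum.cong) (auto simp: c)
      also have "\<dots> = b" using b fB by simp
      finally show "b = (\<Sum>(f, e)\<leftarrow>ps. cscale (f b) e)" by simp
    qed
    then show ?thesis by simp
  qed
  moreover have "\<forall>p\<in>set ps. clinear (fst p)" using lin by (auto simp: ps_def)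
  ultimately show ?thesis using B(3) by blast
qed

lemma clinear_functionals_separate:
  fixes v :: "'a::cvec"
  assumes "\<And>f::'a \<Rightarrow> complex. clinear f \<Longrightarrow> f v = 0"
  shows "v = 0"
proof -
  obtain ps where ps: "\<forall>p\<in>set ps. clinear (fst p)" "v = (\<Sum>(f, e)\<leftarrow>ps. cscale (f v) e)"
    using finite_coordinates[of "{v}"] by auto
  have "(\<Sum>(f, e)\<leftarrow>ps. cscale (f v) e) = (\<Sum>p\<leftarrow>ps. (0::'a))"
    by (rule arg_cong[where f=sum_list], rule map_cong) (use ps(1) assms in \<open>auto simp: split_beta\<close>)
  then show ?thesis using ps(2) by simp
qed

lemma exists_clinear_functional_1:
  fixes v :: "'a::cvec"
  assumes "v \<noteq> 0"
  shows "\<exists>f::'a \<Rightarrow> complex. clinear f \<and> f v = 1"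
proof -
  obtain f :: "'a \<Rightarrow> complex" where f: "clinear f" "f v \<noteq> 0" using clinear_functionals_separate assms by blast
  then show ?thesis
    by (intro exI[of _ "\<lambda>x. f x / f v"]) (auto simp: clinear_def add_divide_distrib)
qed

named_theorems lin

declare clinear_id [lin] clinear_scalar_mult [lin]

lemma cbilinearI: "(\<And>v. clinear (F v)) \<Longrightarrow> (\<And>w. clinear (\<lambda>v. F v w)) \<Longrightarrow> cbilinear F"
  by (simp add: cbilinear_def)
lemma cbilinear_l: "cbilinear F \<Longrightarrow> clinear (\<lambda>v. F v w)" by (simp add: cbilinear_def)
lemma cbilinear_r: "cbilinear F \<Longrightarrow> clinear (F v)" by (simp add: cbilinear_def)
lemma sum_list_swap: "(\<Sum>x\<leftarrow>xs. \<Sum>y\<leftarrow>ys. f x y) = (\<Sum>y\<leftarrow>ys. \<Sum>x\<leftarrow>xs. f x y::'a::comm_monoid_add)"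
  by (induction xs) (simp_all add: sum_list_addf)
lemma sum_list_cong: "(\<And>x. x \<in> set xs \<Longrightarrow> f x = g x) \<Longrightarrow> sum_list (map f xs) = sum_list (map g xs)"
  by (simp cong: map_cong)
lemma sum_list_split_cong: "(\<And>a b. (a, b) \<in> set xs \<Longrightarrow> f a b = g a b) \<Longrightarrow> (\<Sum>(a, b)\<leftarrow>xs. f a b) = (\<Sum>(a, b)\<leftarrow>xs. g a b)"
  by (rule sum_list_cong) auto

section \<open>Algebraic tensor products\<close>

definition tsum :: "('a::cvec \<times> 'b::cvec) list \<Rightarrow> ('a, 'b) tensor" where
  "tsum xs = (\<Sum>(v, w)\<leftarrow>xs. tprod v w)"

lemma Rep_tsum: "Rep_tensor (tsum xs) = tfun xs"
proof (induction xs)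
  case Nil
  then show ?case by (simp add: tsum_def zero_tensor.rep_eq)
next
  case (Cons p xs)
  obtain v w where p: "p = (v, w)" by fastforce
  have "tsum (p # xs) = tprod v w + tsum xs" by (simp add: tsum_def p)
  then show ?case using Cons
    by (simp add: plus_tensor.rep_eq tprod.rep_eq tfun_append[of "[(v,w)]" xs, simplified] p)
qed

lemma Rep_tensor_trep: "Rep_tensor t = tfun (trep t)"
  unfolding trep_def by (rule someI_ex) (use Rep_tensor[of t] in auto)
lemma tsum_trep[simp]: "tsum (trep t) = t"
  using Rep_tensor_inject[of "tsum (trep t)" t] Rep_tsum[of "trep t"] Rep_tensor_trep[of t] by simp

lemma tensor_eqI_Rep: "(\<And>f g. clinear f \<Longrightarrow> clinear g \<Longrightarrow> Rep_tensor s (f, g) = Rep_tensor t (f, g)) \<Longrightarrow> s = t"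
proof -
  assume a: "\<And>f g. clinear f \<Longrightarrow> clinear g \<Longrightarrow> Rep_tensor s (f, g) = Rep_tensor t (f, g)"
  have "Rep_tensor s = Rep_tensor t"
  proof
    fix p :: "('a \<Rightarrow> complex) \<times> ('b \<Rightarrow> complex)"
    obtain f g where p: "p = (f, g)" by fastforce
    show "Rep_tensor s p = Rep_tensor t p"
      using a[of f g] by (cases "clinear f \<and> clinear g") (auto simp: p Rep_tensor_trep[of s] Rep_tensor_trep[of t] tfun_def)
  qed
  then show ?thesis using Rep_tensor_inject by blast
qed

lemma Rep_tensor_eval: "clinear f \<Longrightarrow> clinear g \<Longrightarrow> Rep_tensor t (f, g) = (\<Sum>(v, w)\<leftarrow>trep t. f v * g w)"
  by (simp add: Rep_tensor_trep tfun_def)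

lemma scalar_sums_eq_if_tfun_eq:
  fixes \<phi> :: "'a::cvec \<Rightarrow> 'b::cvec \<Rightarrow> complex"
  assumes phi: "cbilinear \<phi>" and eq: "tfun xs = tfun ys"
  shows "(\<Sum>(v, w)\<leftarrow>xs. \<phi> v w) = (\<Sum>(v, w)\<leftarrow>ys. \<phi> v w)"
proof -
  obtain ps where ps: "\<forall>p\<in>set ps. clinear (fst p)" "\<forall>v\<in>fst ` set (xs @ ys). v = (\<Sum>(f, e)\<leftarrow>ps. cscale (f v) e)"
    using finite_coordinates[of "fst ` set (xs @ ys)"] by auto
  have expand: "(\<Sum>(v, w)\<leftarrow>zs. \<phi> v w) = (\<Sum>(f, e)\<leftarrow>ps. tfun zs (f, \<phi> e))" if zs: "set zs \<subseteq> set (xs @ ys)" for zs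
  proof -
    have "(\<Sum>(v, w)\<leftarrow>zs. \<phi> v w) = (\<Sum>(v, w)\<leftarrow>zs. \<Sum>(f, e)\<leftarrow>ps. f v * \<phi> e w)"
    proof (rule sum_list_split_cong)
      fix v w assume "(v, w) \<in> set zs"
      then have v: "v = (\<Sum>(f, e)\<leftarrow>ps. cscale (f v) e)" using ps(2) zs by force
      have "\<phi> v w = \<phi> (\<Sum>(f, e)\<leftarrow>ps. cscale (f v) e) w" using v by simp
      also have "\<dots> = (\<Sum>(f, e)\<leftarrow>ps. \<phi> (cscale (f v) e) w)"
        using clinear_sum_list[OF cbilinear_l[OF phi, of w], of "\<lambda>(f, e). cscale (f v) e" ps]
        by (simp add: split_def)
      also have "\<dots> = (\<Sum>(f, e)\<leftarrow>ps. f v * \<phi> e w)"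
        using clinear_scale[OF cbilinear_l[OF phi, of w]] by (simp add: split_def)
      finally show "\<phi> v w = (\<Sum>(f, e)\<leftarrow>ps. f v * \<phi> e w)" .
    qed
    also have "\<dots> = (\<Sum>(f, e)\<leftarrow>ps. \<Sum>(v, w)\<leftarrow>zs. f v * \<phi> e w)"
      by (simp add: split_def sum_list_swap[of _ zs ps])
    also have "\<dots> = (\<Sum>(f, e)\<leftarrow>ps. tfun zs (f, \<phi> e))"
      using ps(1) cbilinear_r[OF phi] by (intro sum_list_split_cong) (auto simp: tfun_def)
    finally show ?thesis .
  qed
  show ?thesis using expand[of xs] expand[of ys] eq by simp
qed

lemma sums_eq_if_tfun_eq:
  fixes F :: "'a::cvec \<Rightarrow> 'b::cvec \<Rightarrow> 'c::cvec"
  assumes F: "cbilinear F" and eq: "tfun xs = tfun ys"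
  shows "(\<Sum>(v, w)\<leftarrow>xs. F v w) = (\<Sum>(v, w)\<leftarrow>ys. F v w)"
proof (rule ccontr)
  assume ne: "\<not> ?thesis"
  let ?d = "(\<Sum>(v, w)\<leftarrow>xs. F v w) - (\<Sum>(v, w)\<leftarrow>ys. F v w)"
  have "?d \<noteq> 0" using ne by simp
  then obtain h :: "'c \<Rightarrow> complex" where h: "clinear h" "h ?d \<noteq> 0"
    using clinear_functionals_separate by blast
  have bil: "cbilinear (\<lambda>v w. h (F v w))"
    using h(1) F by (intro cbilinearI clinear_comp[OF h(1)]) (simp_all add: cbilinear_def)
  have "h ?d = (\<Sum>(v, w)\<leftarrow>xs. h (F v w)) - (\<Sum>(v, w)\<leftarrow>ys. h (F v w))"
    by (simp only: clinear_diff[OF h(1)] clinear_sum_list[OF h(1)] split_def)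
  also have "\<dots> = 0" using scalar_sums_eq_if_tfun_eq[OF bil eq] by simp
  finally show False using h(2) by simp
qed

lemma tapply_tsum: "cbilinear F \<Longrightarrow> tapply F (tsum xs) = (\<Sum>(v, w)\<leftarrow>xs. F v w)"
  unfolding tapply_def by (rule sums_eq_if_tfun_eq) (auto simp: Rep_tensor_trep[symmetric] Rep_tsum)
lemma tprod_add_l: "tprod (v + v') w = tprod v w + tprod v' w"
  by (rule tensor_eqI_Rep) (simp add: plus_tensor.rep_eq tprod.rep_eq tfun_def clinear_add algebra_simps)
lemma tprod_add_r: "tprod v (w + w') = tprod v w + tprod v w'"
  by (rule tensor_eqI_Rep) (simp add: plus_tensor.rep_eq tprod.rep_eq tfun_def clinear_add algebra_simps)
lemma tprod_scale_l: "tprod (cscale c v) w = cscale c (tprod v w)"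
  by (rule tensor_eqI_Rep) (simp add: cscale_tensor.rep_eq tprod.rep_eq tfun_def clinear_scale algebra_simps)
lemma tprod_scale_r: "tprod v (cscale c w) = cscale c (tprod v w)"
  by (rule tensor_eqI_Rep) (simp add: cscale_tensor.rep_eq tprod.rep_eq tfun_def clinear_scale algebra_simps)
lemma cbilinear_tprod[lin]: "cbilinear tprod"
  by (auto intro!: cbilinearI clinearI simp: tprod_add_l tprod_add_r tprod_scale_l tprod_scale_r)
lemma tsum_Cons: "tsum ((v, w) # xs) = tprod v w + tsum xs" by (simp add: tsum_def)
lemma tsum_append: "tsum (xs @ ys) = tsum xs + tsum ys" by (simp add: tsum_def)
lemma tsum_Nil: "tsum [] = 0" by (simp add: tsum_def)
lemma tapply_tprod[simp]: "cbilinear F \<Longrightarrow> tapply F (tprod v w) = F v w"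
  using tapply_tsum[of F "[(v, w)]"] by (simp add: tsum_def)

lemma tapply_add: "cbilinear F \<Longrightarrow> tapply F (s + t) = tapply F s + tapply F t"
proof -
  assume F: "cbilinear F"
  have "tapply F (s + t) = tapply F (tsum (trep s @ trep t))" by (simp add: tsum_append)
  also have "\<dots> = (\<Sum>(v, w)\<leftarrow>trep s @ trep t. F v w)" by (rule tapply_tsum[OF F])
  also have "\<dots> = tapply F s + tapply F t" by (simp add: tapply_def)
  finally show ?thesis .
qed

lemma tsum_scale: "tsum (map (\<lambda>(v, w). (cscale c v, w)) xs) = cscale c (tsum xs)"
  by (induction xs) (auto simp: tsum_def tprod_scale_l cscale_add_right)

lemma tapply_scale: "cbilinear F \<Longrightarrow> tapply F (cscale c t) = cscale c (tapply F t)"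
proof -
  assume F: "cbilinear F"
  have "tapply F (cscale c t) = tapply F (tsum (map (\<lambda>(v, w). (cscale c v, w)) (trep t)))"
    by (simp add: tsum_scale)
  also have "\<dots> = (\<Sum>(v, w)\<leftarrow>trep t. F (cscale c v) w)"
    using F by (simp add: tapply_tsum o_def split_def)
  also have "\<dots> = (\<Sum>(v, w)\<leftarrow>trep t. cscale c (F v w))"
    using clinear_scale[OF cbilinear_l[OF F]] by (simp add: split_def)
  also have "\<dots> = cscale c (tapply F t)"
    by (simp add: tapply_def cscale_sum_list split_def)
  finally show ?thesis .
qed

lemma clinear_tapply[lin]: "cbilinear F \<Longrightarrow> clinear (tapply F)"
  by (simp add: clinearI tapply_add tapply_scale)
lemma tapply_zero[simp]: "cbilinear F \<Longrightarrow> tapply F 0 = 0"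
  using clinear_0[OF clinear_tapply] by blast
lemma clinear_comp_tapply: "clinear L \<Longrightarrow> L (tapply F t) = tapply (\<lambda>v w. L (F v w)) t"
  by (simp add: tapply_def clinear_sum_list split_def)
lemma tapply_tapply: "cbilinear G \<Longrightarrow> tapply G (tapply H t) = tapply (\<lambda>v w. tapply G (H v w)) t"
  by (rule clinear_comp_tapply[OF clinear_tapply])
lemma tapply_fun_scale: "tapply (\<lambda>v w. cscale c (F v w)) t = cscale c (tapply F t)"
  by (simp add: tapply_def split_def cscale_sum_list)
lemma tapply_fun_0[simp]: "tapply (\<lambda>v w. 0) t = 0"
  by (simp add: tapply_def split_def sum_list_0)
lemma clinear_tapply_param[lin]: "(\<And>v w. clinear (\<lambda>x. F x v w)) \<Longrightarrow> clinear (\<lambda>x. tapply (F x) t)"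
  by (simp add: tapply_def clinear_sum_list_fun split_def)
lemma tapply_swap: "tapply (\<lambda>x a. tapply (\<lambda>b c. H x a b c) U) X = tapply (\<lambda>b c. tapply (\<lambda>x a. H x a b c) X) U"
  unfolding tapply_def by (simp add: split_def sum_list_swap[of _ "trep X"])
lemma tensor_expand: "t = (\<Sum>(v, w)\<leftarrow>trep t. tprod v w)"
  using tsum_trep[of t] by (simp add: tsum_def)
lemma tapply_tprod_id: "tapply (\<lambda>v w. tprod v w) t = t"
  using tensor_expand[of t] by (simp add: tapply_def)

lemma tensor_clinear_eqI:
  assumes "clinear L" "clinear M" "\<And>v w. L (tprod v w) = M (tprod v w)"
  shows "L t = M t"
proof -
  have "L t = L (\<Sum>(v, w)\<leftarrow>trep t. tprod v w)" using tensor_expand[of t] by simp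
  also have "\<dots> = (\<Sum>(v, w)\<leftarrow>trep t. L (tprod v w))"
    using clinear_sum_list[OF assms(1), of "\<lambda>(v, w). tprod v w"] by (simp add: split_def)
  also have "\<dots> = (\<Sum>(v, w)\<leftarrow>trep t. M (tprod v w))" using assms(3) by simp
  also have "\<dots> = M (\<Sum>(v, w)\<leftarrow>trep t. tprod v w)"
    using clinear_sum_list[OF assms(2), of "\<lambda>(v, w). tprod v w"] by (simp add: split_def)
  also have "\<dots> = M t" using tensor_expand[of t] by simp
  finally show ?thesis .
qed

definition lslice :: "('b::cvec \<Rightarrow> complex) \<Rightarrow> ('a::cvec, 'b) tensor \<Rightarrow> 'a" where
  "lslice g t = tapply (\<lambda>v w. cscale (g w) v) t"

definition rslice :: "('a::cvec \<Rightarrow> complex) \<Rightarrow> ('a, 'b::cvec) tensor \<Rightarrow> 'b" where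
  "rslice f t = tapply (\<lambda>v w. cscale (f v) w) t"
lemma cbilinear_lslice_fun[lin]: "clinear g \<Longrightarrow> cbilinear (\<lambda>v w. cscale (g w) v)"
  by (auto intro!: cbilinearI clinearI simp: cscale_add_right cscale_add_left clinear_add clinear_scale cscale_cscale mult.commute)
lemma cbilinear_rslice_fun[lin]: "clinear f \<Longrightarrow> cbilinear (\<lambda>v w. cscale (f v) w)"
  by (auto intro!: cbilinearI clinearI simp: cscale_add_right cscale_add_left clinear_add clinear_scale cscale_cscale mult.commute)
lemma clinear_lslice[lin]: "clinear g \<Longrightarrow> clinear (lslice g)"
  unfolding lslice_def by (intro lin)
lemma clinear_rslice[lin]: "clinear f \<Longrightarrow> clinear (rslice f)"
  unfolding rslice_def by (intro lin)
lemma lslice_tprod[simp]: "clinear g \<Longrightarrow> lslice g (tprod v w) = cscale (g w) v"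
  unfolding lslice_def by (rule tapply_tprod, rule cbilinear_lslice_fun)
lemma rslice_tprod[simp]: "clinear f \<Longrightarrow> rslice f (tprod v w) = cscale (f v) w"
  unfolding rslice_def by (rule tapply_tprod, rule cbilinear_rslice_fun)

lemma tensor_eq_lslices:
  fixes s t :: "('a::cvec, 'b::cvec) tensor"
  assumes "\<And>g. clinear g \<Longrightarrow> lslice g s = lslice g t"
  shows "s = t"
proof (rule tensor_eqI_Rep)
  fix f :: "'a \<Rightarrow> complex" and g :: "'b \<Rightarrow> complex" assume f: "clinear f" and g: "clinear g"
  have *: "Rep_tensor u (f, g) = f (lslice g u)" for u
    unfolding Rep_tensor_eval[OF f g] lslice_def tapply_def
    by (simp add: clinear_sum_list[OF f] split_def clinear_scale[OF f] mult.commute)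
  show "Rep_tensor s (f, g) = Rep_tensor t (f, g)" using assms[OF g] by (simp add: *)
qed

lemma tensor_eq_rslices:
  fixes s t :: "('a::cvec, 'b::cvec) tensor"
  assumes "\<And>f. clinear f \<Longrightarrow> rslice f s = rslice f t"
  shows "s = t"
proof (rule tensor_eqI_Rep)
  fix f :: "'a \<Rightarrow> complex" and g :: "'b \<Rightarrow> complex" assume f: "clinear f" and g: "clinear g"
  have *: "Rep_tensor u (f, g) = g (rslice f u)" for u
    unfolding Rep_tensor_eval[OF f g] rslice_def tapply_def
    by (simp add: clinear_sum_list[OF g] split_def clinear_scale[OF g])
  show "Rep_tensor s (f, g) = Rep_tensor t (f, g)" using assms[OF f] by (simp add: *)
qed

lemma lslice_0[simp]: "clinear g \<Longrightarrow> lslice g 0 = 0"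
  unfolding lslice_def by (rule tapply_zero, rule cbilinear_lslice_fun)
lemma rslice_0[simp]: "clinear f \<Longrightarrow> rslice f 0 = 0"
  unfolding rslice_def by (rule tapply_zero, rule cbilinear_rslice_fun)
lemma tensor_zero_lslices: "(\<And>g. clinear g \<Longrightarrow> lslice g s = 0) \<Longrightarrow> s = 0"
  by (rule tensor_eq_lslices) simp
lemma tensor_zero_rslices: "(\<And>f. clinear f \<Longrightarrow> rslice f s = 0) \<Longrightarrow> s = 0"
  by (rule tensor_eq_rslices) simp
lemma cbilinear_tprod_comp[lin]: "clinear P \<Longrightarrow> clinear Q \<Longrightarrow> cbilinear (\<lambda>v w. tprod (P v) (Q w))"
  by (auto intro!: cbilinearI clinearI simp: clinear_add clinear_scale tprod_add_l tprod_add_r tprod_scale_l tprod_scale_r)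

lemma tensor_eq_0_by_leg1_maps:
  fixes Z :: "('a::cvec, 'b::cvec) tensor" and \<Phi> :: "'i \<Rightarrow> 'a \<Rightarrow> 'c::cvec"
  assumes lin: "\<And>i. clinear (\<Phi> i)" and inj: "\<And>v. (\<And>i. \<Phi> i v = 0) \<Longrightarrow> v = 0"
    and z: "\<And>i. tapply (\<lambda>v w. tprod (\<Phi> i v) w) Z = 0"
  shows "Z = 0"
proof (rule tensor_zero_lslices)
  fix g :: "'b \<Rightarrow> complex" assume g: "clinear g"
  show "lslice g Z = 0"
  proof (rule inj)
    fix i
    have "\<Phi> i (lslice g Z) = lslice g (tapply (\<lambda>v w. tprod (\<Phi> i v) w) Z)"
      unfolding lslice_def
      by (simp add: clinear_comp_tapply[OF lin] tapply_tapply[OF cbilinear_lslice_fun[OF g]]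
          clinear_scale[OF lin] cbilinear_lslice_fun[OF g] cbilinear_tprod)
    also have "\<dots> = 0" using z clinear_0[OF clinear_lslice[OF g]] by simp
    finally show "\<Phi> i (lslice g Z) = 0" .
  qed
qed

lemma tensor_eq_0_by_leg2_maps:
  fixes Z :: "('a::cvec, 'b::cvec) tensor" and \<Phi> :: "'i \<Rightarrow> 'b \<Rightarrow> 'c::cvec"
  assumes lin: "\<And>i. clinear (\<Phi> i)" and inj: "\<And>v. (\<And>i. \<Phi> i v = 0) \<Longrightarrow> v = 0"
    and z: "\<And>i. tapply (\<lambda>v w. tprod v (\<Phi> i w)) Z = 0"
  shows "Z = 0"
proof (rule tensor_zero_rslices)
  fix f :: "'a \<Rightarrow> complex" assume f: "clinear f"
  show "rslice f Z = 0"
  proof (rule inj)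
    fix i
    have "\<Phi> i (rslice f Z) = rslice f (tapply (\<lambda>v w. tprod v (\<Phi> i w)) Z)"
      unfolding rslice_def
      by (simp add: clinear_comp_tapply[OF lin] tapply_tapply[OF cbilinear_rslice_fun[OF f]]
          clinear_scale[OF lin] cbilinear_rslice_fun[OF f] cbilinear_tprod)
    also have "\<dots> = 0" using z clinear_0[OF clinear_rslice[OF f]] by simp
    finally show "\<Phi> i (rslice f Z) = 0" .
  qed
qed

lemma tapply_cong: "(\<And>v w. F v w = G v w) \<Longrightarrow> tapply F t = tapply G t"
  by (simp add: tapply_def)
lemma clinear_tprod_l[lin]: "clinear (\<lambda>v. tprod v w)"
  using cbilinear_l[OF cbilinear_tprod] .
lemma clinear_tprod_r[lin]: "clinear (\<lambda>w. tprod v w)"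
  using cbilinear_r[OF cbilinear_tprod] .
lemma clinear_tprod_lc[lin]: "clinear P \<Longrightarrow> clinear (\<lambda>v. tprod (P v) w)"
  by (rule clinear_comp[OF clinear_tprod_l])
lemma clinear_tprod_rc[lin]: "clinear P \<Longrightarrow> clinear (\<lambda>w. tprod v (P w))"
  by (rule clinear_comp[OF clinear_tprod_r])
lemma tprod_0r[simp]: "tprod v 0 = 0" using clinear_0[OF clinear_tprod_r] .
lemma lin_lslice_c[lin]: "clinear g \<Longrightarrow> clinear P \<Longrightarrow> clinear (\<lambda>x. lslice g (P x))"
  by (rule clinear_comp[OF clinear_lslice])
lemma lin_rslice_c[lin]: "clinear f \<Longrightarrow> clinear P \<Longrightarrow> clinear (\<lambda>x. rslice f (P x))"
  by (rule clinear_comp[OF clinear_rslice])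
lemma lin_tapply_c[lin]: "cbilinear F \<Longrightarrow> clinear P \<Longrightarrow> clinear (\<lambda>x. tapply F (P x))"
  by (rule clinear_comp[OF clinear_tapply])
lemma lslice_tapply: "clinear g \<Longrightarrow> lslice g (tapply F t) = tapply (\<lambda>v w. lslice g (F v w)) t"
  by (rule clinear_comp_tapply[OF clinear_lslice])
lemma rslice_tapply: "clinear f \<Longrightarrow> rslice f (tapply F t) = tapply (\<lambda>v w. rslice f (F v w)) t"
  by (rule clinear_comp_tapply[OF clinear_rslice])
lemma tassoc_linear: "clinear L \<Longrightarrow> L (tassoc W) = tapply (\<lambda>u s. tapply (\<lambda>v w. L (tprod (tprod u v) w)) s) W"
  unfolding tassoc_def by (simp add: clinear_comp_tapply)

lemma lslice_rslice_swap: "clinear f \<Longrightarrow> clinear g \<Longrightarrow> g (rslice f Z) = f (lslice g Z)"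
  by (rule tensor_clinear_eqI[OF clinear_comp[OF _ clinear_rslice] clinear_comp[OF _ clinear_lslice]])
     (simp_all add: clinear_scale)

lemma sum_list_tapply: "(\<Sum>x\<leftarrow>xs. tapply (F x) t) = tapply (\<lambda>v w. \<Sum>x\<leftarrow>xs. F x v w) t"
  unfolding tapply_def by (simp add: split_def sum_list_swap[of _ xs])

lemma tapply_eq_0_through_leg2:
  fixes Z :: "('u::cvec, 'a::cvec) tensor" and B :: "'u \<Rightarrow> 'y::cvec \<Rightarrow> 'c::cvec"
  assumes Blin: "\<And>u. clinear (B u)" and data: "\<And>y. tapply (\<lambda>u r. tprod (B u y) r) Z = 0"
    and rho: "clinear \<rho>"
  shows "tapply (\<lambda>u r. B u (\<rho> r)) Z = 0"
proof -
  obtain ps where ps: "\<forall>p\<in>set ps. clinear (fst p)" "\<forall>v\<in>snd ` set (trep Z). v = (\<Sum>(f, e)\<leftarrow>ps. cscale (f v) e)"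
    using finite_coordinates[of "snd ` set (trep Z)"] by auto
  have "tapply (\<lambda>u r. B u (\<rho> r)) Z = (\<Sum>(u, r)\<leftarrow>trep Z. \<Sum>(f, e)\<leftarrow>ps. cscale (f r) (B u (\<rho> e)))"
    unfolding tapply_def
  proof (rule sum_list_split_cong)
    fix u r assume ur: "(u, r) \<in> set (trep Z)"
    then have "r = (\<Sum>(f, e)\<leftarrow>ps. cscale (f r) e)" using ps(2) by force
    then have "B u (\<rho> r) = B u (\<rho> (\<Sum>(f, e)\<leftarrow>ps. cscale (f r) e))" by simp
    also have "\<dots> = (\<Sum>(f, e)\<leftarrow>ps. cscale (f r) (B u (\<rho> e)))"
      by (simp add: clinear_sum_list[OF clinear_comp[OF Blin rho]] split_def clinear_scale[OF clinear_comp[OF Blin rho]])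
    finally show "B u (\<rho> r) = (\<Sum>(f, e)\<leftarrow>ps. cscale (f r) (B u (\<rho> e)))" .
  qed
  also have "\<dots> = (\<Sum>(f, e)\<leftarrow>ps. \<Sum>(u, r)\<leftarrow>trep Z. cscale (f r) (B u (\<rho> e)))"
    by (simp add: split_def sum_list_swap[of _ "trep Z" ps])
  also have "\<dots> = (\<Sum>(f, e)\<leftarrow>ps. lslice f (tapply (\<lambda>u r. tprod (B u (\<rho> e)) r) Z))"
  proof (rule sum_list_split_cong)
    fix f e assume "(f, e) \<in> set ps"
    then have f: "clinear f" using ps(1) by force
    show "(\<Sum>(u, r)\<leftarrow>trep Z. cscale (f r) (B u (\<rho> e))) = lslice f (tapply (\<lambda>u r. tprod (B u (\<rho> e)) r) Z)"
      by (simp add: lslice_tapply f) (simp add: tapply_def)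
  qed
  also have "\<dots> = (\<Sum>p\<leftarrow>ps. 0)"
    unfolding split_def by (rule sum_list_cong) (use ps(1) in \<open>simp add: data\<close>)
  also have "\<dots> = 0" by (rule sum_list_0)
  finally show ?thesis .
qed

section \<open>Non-degenerate algebras\<close>

lemma in_alg_elem_of: "in_alg m M \<Longrightarrow> M = mult_of m (elem_of m M)"
  unfolding in_alg_def elem_of_def by (rule someI_ex)

locale nondeg_algebra =
  fixes m :: "'a::cvec \<Rightarrow> 'a \<Rightarrow> 'a"
  assumes alg: "is_alg m" and nd: "nondeg m"
begin

lemma bil[lin]: "cbilinear m" using alg by (simp add: is_alg_def)
lemma assoc: "m (m x y) z = m x (m y z)" using alg by (simp add: is_alg_def)
lemma lin_l[lin]: "clinear (\<lambda>x. m x y)" by (rule cbilinear_l[OF bil])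
lemma lin_r[lin]: "clinear (m x)" by (rule cbilinear_r[OF bil])
lemma add_r: "m x (y + y') = m x y + m x y'" by (rule clinear_add[OF lin_r])
lemma scale_l: "m (cscale c x) y = cscale c (m x y)" by (rule clinear_scale[OF lin_l])
lemma scale_r: "m x (cscale c y) = cscale c (m x y)" by (rule clinear_scale[OF lin_r])
lemma diff_l: "m (x - x') y = m x y - m x' y" by (rule clinear_diff[OF lin_l])
lemma diff_r: "m x (y - y') = m x y - m x y'" by (rule clinear_diff[OF lin_r])
lemma nondeg_l: "(\<And>y. m x y = 0) \<Longrightarrow> x = 0" using nd unfolding nondeg_def by blast
lemma nondeg_r: "(\<And>y. m y x = 0) \<Longrightarrow> x = 0" using nd unfolding nondeg_def by blast
lemma eq_by_right: "(\<And>y. m x y = m x' y) \<Longrightarrow> x = x'"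
  using nondeg_l[of "x - x'"] by (simp add: diff_l)
lemma eq_by_left: "(\<And>y. m y x = m y x') \<Longrightarrow> x = x'"
  using nondeg_r[of "x - x'"] by (simp add: diff_r)

abbreviation tm :: "('a, 'a) tensor \<Rightarrow> ('a, 'a) tensor \<Rightarrow> ('a, 'a) tensor" where "tm \<equiv> tmul m m"

definition lmul1 :: "'a \<Rightarrow> ('a, 'a) tensor \<Rightarrow> ('a, 'a) tensor" where "lmul1 c X = tapply (\<lambda>p q. tprod (m c p) q) X"

definition rmul1 :: "'a \<Rightarrow> ('a, 'a) tensor \<Rightarrow> ('a, 'a) tensor" where "rmul1 c X = tapply (\<lambda>p q. tprod (m p c) q) X"

definition lmul2 :: "'a \<Rightarrow> ('a, 'a) tensor \<Rightarrow> ('a, 'a) tensor" where "lmul2 c X = tapply (\<lambda>p q. tprod p (m c q)) X"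

definition rmul2 :: "'a \<Rightarrow> ('a, 'a) tensor \<Rightarrow> ('a, 'a) tensor" where "rmul2 c X = tapply (\<lambda>p q. tprod p (m q c)) X"
lemma bil_lmul1[lin]: "cbilinear (\<lambda>p q. tprod (m c p) q)" by (intro lin clinear_id)
lemma bil_rmul1[lin]: "cbilinear (\<lambda>p q. tprod (m p c) q)" by (intro lin clinear_id)
lemma bil_lmul2[lin]: "cbilinear (\<lambda>p q. tprod p (m c q))" by (intro lin clinear_id)
lemma bil_rmul2[lin]: "cbilinear (\<lambda>p q. tprod p (m q c))" by (intro lin clinear_id)
lemma bil_tm_inner[lin]: "cbilinear (\<lambda>v' w'. tprod (m v v') (m w w'))" by (intro lin)
lemma bil_tm_outer[lin]: "cbilinear (\<lambda>v w. tapply (\<lambda>v' w'. tprod (m v v') (m w w')) t)"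
  by (intro cbilinearI clinear_tapply_param lin)
lemma lin_lmul1[lin]: "clinear (lmul1 c)" unfolding lmul1_def by (intro lin)
lemma lin_rmul1[lin]: "clinear (rmul1 c)" unfolding rmul1_def by (intro lin)
lemma lin_lmul2[lin]: "clinear (lmul2 c)" unfolding lmul2_def by (intro lin)
lemma lin_rmul2[lin]: "clinear (rmul2 c)" unfolding rmul2_def by (intro lin)
lemma lin_lmul1c[lin]: "clinear (\<lambda>c. lmul1 c X)" unfolding lmul1_def by (intro lin)
lemma lin_lmul2c[lin]: "clinear (\<lambda>c. lmul2 c X)" unfolding lmul2_def by (intro lin)
lemma lmul1_tprod[simp]: "lmul1 c (tprod p q) = tprod (m c p) q" by (simp add: lmul1_def lin)
lemma rmul1_tprod[simp]: "rmul1 c (tprod p q) = tprod (m p c) q" by (simp add: rmul1_def lin)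
lemma lmul2_tprod[simp]: "lmul2 c (tprod p q) = tprod p (m c q)" by (simp add: lmul2_def lin)
lemma rmul2_tprod[simp]: "rmul2 c (tprod p q) = tprod p (m q c)" by (simp add: rmul2_def lin)
lemma tm_eq_tapply: "tm s t = tapply (\<lambda>v w. tapply (\<lambda>v' w'. tprod (m v v') (m w w')) t) s"
  by (simp add: tmul_def)

lemma tm_tprod_l: "tm (tprod a b) t = lmul1 a (lmul2 b t)"
proof -
  have "tm (tprod a b) t = tapply (\<lambda>v' w'. tprod (m a v') (m b w')) t"
    by (simp add: tm_eq_tapply lin)
  also have "\<dots> = lmul1 a (lmul2 b t)"
    unfolding lmul2_def by (simp add: clinear_comp_tapply[OF lin_lmul1])
  finally show ?thesis .
qed

lemma tm_tprod: "tm (tprod a b) (tprod c d) = tprod (m a c) (m b d)"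
  by (simp add: tm_tprod_l)
lemma lin_tm_r[lin]: "clinear (tm s)"
  unfolding tm_eq_tapply by (intro clinear_tapply_param lin)
lemma lin_tm_l[lin]: "clinear (\<lambda>s. tm s t)"
  unfolding tm_eq_tapply by (intro lin)

lemma tm_tprod_r: "tm s (tprod c d) = rmul1 c (rmul2 d s)"
proof (rule tensor_clinear_eqI[of "\<lambda>s. tm s (tprod c d)" "\<lambda>s. rmul1 c (rmul2 d s)"])
  show "clinear (\<lambda>s. tm s (tprod c d))" by (intro lin)
  show "clinear (\<lambda>s. rmul1 c (rmul2 d s))" by (rule clinear_comp[OF lin_rmul1 lin_rmul2])
  show "tm (tprod v w) (tprod c d) = rmul1 c (rmul2 d (tprod v w))" for v w by (simp add: tm_tprod)
qed

lemma lmul1_lmul1: "lmul1 c (lmul1 c' t) = lmul1 (m c c') t"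
  by (rule tensor_clinear_eqI[OF clinear_comp[OF lin_lmul1 lin_lmul1] lin_lmul1]) (simp add: assoc)
lemma lmul2_lmul2: "lmul2 c (lmul2 c' t) = lmul2 (m c c') t"
  by (rule tensor_clinear_eqI[OF clinear_comp[OF lin_lmul2 lin_lmul2] lin_lmul2]) (simp add: assoc)
lemma lmul2_lmul1: "lmul2 b (lmul1 c t) = lmul1 c (lmul2 b t)"
  by (rule tensor_clinear_eqI[OF clinear_comp[OF lin_lmul2 lin_lmul1] clinear_comp[OF lin_lmul1 lin_lmul2]]) (simp)

lemma tm_lmul1: "tm (lmul1 c X) t = lmul1 c (tm X t)"
proof (rule tensor_clinear_eqI[of "\<lambda>X. tm (lmul1 c X) t" "\<lambda>X. lmul1 c (tm X t)"])
  show "clinear (\<lambda>X. tm (lmul1 c X) t)" by (intro clinear_comp[OF lin_tm_l] lin)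
  show "clinear (\<lambda>X. lmul1 c (tm X t))" by (intro clinear_comp[OF lin_lmul1] lin)
  show "tm (lmul1 c (tprod v w)) t = lmul1 c (tm (tprod v w) t)" for v w
    by (simp add: tm_tprod_l lmul1_lmul1)
qed

lemma tm_lmul2: "tm (lmul2 c X) t = lmul2 c (tm X t)"
proof (rule tensor_clinear_eqI[of "\<lambda>X. tm (lmul2 c X) t" "\<lambda>X. lmul2 c (tm X t)"])
  show "clinear (\<lambda>X. tm (lmul2 c X) t)" by (intro clinear_comp[OF lin_tm_l] lin)
  show "clinear (\<lambda>X. lmul2 c (tm X t))" by (intro clinear_comp[OF lin_lmul2] lin)
  show "tm (lmul2 c (tprod v w)) t = lmul2 c (tm (tprod v w) t)" for v w
    by (simp add: tm_tprod_l lmul2_lmul2 lmul2_lmul1)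
qed

lemma tm_rmul1: "tm (rmul1 c X) t = tm X (lmul1 c t)"
proof (rule tensor_clinear_eqI[of "\<lambda>X. tm (rmul1 c X) t" "\<lambda>X. tm X (lmul1 c t)"])
  show "clinear (\<lambda>X. tm (rmul1 c X) t)" by (intro clinear_comp[OF lin_tm_l] lin)
  show "clinear (\<lambda>X. tm X (lmul1 c t))" by (intro lin)
  show "tm (rmul1 c (tprod v w)) t = tm (tprod v w) (lmul1 c t)" for v w
    by (simp add: tm_tprod_l lmul1_lmul1 lmul2_lmul1)
qed

lemma tm_rmul2: "tm (rmul2 c X) t = tm X (lmul2 c t)"
proof (rule tensor_clinear_eqI[of "\<lambda>X. tm (rmul2 c X) t" "\<lambda>X. tm X (lmul2 c t)"])
  show "clinear (\<lambda>X. tm (rmul2 c X) t)" by (intro clinear_comp[OF lin_tm_l] lin)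
  show "clinear (\<lambda>X. tm X (lmul2 c t))" by (intro lin)
  show "tm (rmul2 c (tprod v w)) t = tm (tprod v w) (lmul2 c t)" for v w
    by (simp add: tm_tprod_l lmul2_lmul2)
qed

lemma tm_assoc: "tm (tm X Y) Z = tm X (tm Y Z)"
proof (rule tensor_clinear_eqI[of "\<lambda>X. tm (tm X Y) Z" "\<lambda>X. tm X (tm Y Z)"])
  show "clinear (\<lambda>X. tm (tm X Y) Z)" by (intro clinear_comp[OF lin_tm_l] lin)
  show "clinear (\<lambda>X. tm X (tm Y Z))" by (intro lin)
  show "tm (tm (tprod v w) Y) Z = tm (tprod v w) (tm Y Z)" for v w
    by (simp add: tm_tprod_l tm_lmul1 tm_lmul2)
qed

lemma tm_nondeg_l:
  assumes "\<And>t. tm X t = 0" shows "X = 0"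
proof (rule tensor_eq_0_by_leg2_maps[of "\<lambda>d w. m w d"])
  show "clinear (\<lambda>w. m w d)" for d by (rule lin_l)
  show "v = 0" if "\<And>d. m v d = 0" for v using nondeg_l that by blast
  fix d
  show "tapply (\<lambda>v w. tprod v (m w d)) X = 0"
  proof (rule tensor_eq_0_by_leg1_maps[of "\<lambda>c v. m v c"])
    show "clinear (\<lambda>v. m v c)" for c by (rule lin_l)
    show "v = 0" if "\<And>c. m v c = 0" for v using nondeg_l that by blast
    fix c
    have "tapply (\<lambda>v w. tprod (m v c) w) (tapply (\<lambda>v w. tprod v (m w d)) X) = tm X (tprod c d)"
      by (simp add: tm_tprod_r rmul1_def rmul2_def)
    then show "tapply (\<lambda>v w. tprod (m v c) w) (tapply (\<lambda>v w. tprod v (m w d)) X) = 0"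
      using assms by simp
  qed
qed

lemma tm_nondeg_r:
  assumes "\<And>t. tm t X = 0" shows "X = 0"
proof (rule tensor_eq_0_by_leg2_maps[of "\<lambda>d w. m d w"])
  show "clinear (\<lambda>w. m d w)" for d by (rule lin_r)
  show "v = 0" if "\<And>d. m d v = 0" for v using nondeg_r that by blast
  fix d
  show "tapply (\<lambda>v w. tprod v (m d w)) X = 0"
  proof (rule tensor_eq_0_by_leg1_maps[of "\<lambda>c v. m c v"])
    show "clinear (\<lambda>v. m c v)" for c by (rule lin_r)
    show "v = 0" if "\<And>c. m c v = 0" for v using nondeg_r that by blast
    fix c
    have "tapply (\<lambda>v w. tprod (m c v) w) (tapply (\<lambda>v w. tprod v (m d w)) X) = tm (tprod c d) X"
      by (simp add: tm_tprod_l lmul1_def lmul2_def)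
    then show "tapply (\<lambda>v w. tprod (m c v) w) (tapply (\<lambda>v w. tprod v (m d w)) X) = 0"
      using assms by simp
  qed
qed

lemma tm_eq_r: "(\<And>t. tm X t = tm Y t) \<Longrightarrow> X = Y"
  using tm_nondeg_l[of "X - Y"] clinear_diff[OF lin_tm_l] by (metis eq_iff_diff_eq_0)
lemma tm_eq_l: "(\<And>t. tm t X = tm t Y) \<Longrightarrow> X = Y"
  using tm_nondeg_r[of "X - Y"] clinear_diff[OF lin_tm_r] by (metis eq_iff_diff_eq_0)

lemma multiplier_clinear:
  assumes M: "is_multiplier tm M"
  shows "clinear (fst M)" "clinear (snd M)"
proof -
  have a1: "fst M (tm x y) = tm (fst M x) y" and a2: "snd M (tm x y) = tm x (snd M y)"
    and a3: "tm x (fst M y) = tm (snd M x) y" for x y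
    using M by (auto simp: is_multiplier_def)
  show "clinear (fst M)"
  proof (rule clinearI)
    fix x y show "fst M (x + y) = fst M x + fst M y"
      by (rule tm_eq_l) (simp add: a3 clinear_add[OF lin_tm_r])
    fix c x show "fst M (cscale c x) = cscale c (fst M x)"
      by (rule tm_eq_l) (simp add: a3 clinear_scale[OF lin_tm_r])
  qed
  show "clinear (snd M)"
  proof (rule clinearI)
    fix x y show "snd M (x + y) = snd M x + snd M y"
      by (rule tm_eq_r) (simp add: a3[symmetric] clinear_add[OF lin_tm_l])
    fix c x show "snd M (cscale c x) = cscale c (snd M x)"
      by (rule tm_eq_r) (simp add: a3[symmetric] clinear_scale[OF lin_tm_l])
  qed
qed

lemma elem_of_fst: "in_alg tm M \<Longrightarrow> tm (elem_of tm M) t = fst M t"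
  using in_alg_elem_of[of tm M] by (metis fst_conv mult_of_def)
lemma lin_m_l_c[lin]: "clinear P \<Longrightarrow> clinear (\<lambda>x. m (P x) y)" by (rule clinear_comp[OF lin_l])
lemma lin_m_r_c[lin]: "clinear P \<Longrightarrow> clinear (\<lambda>x. m y (P x))" by (rule clinear_comp[OF lin_r])
lemma lin_lmul1_c[lin]: "clinear P \<Longrightarrow> clinear (\<lambda>x. lmul1 c (P x))" by (rule clinear_comp[OF lin_lmul1])
lemma lin_lmul2_c[lin]: "clinear P \<Longrightarrow> clinear (\<lambda>x. lmul2 c (P x))" by (rule clinear_comp[OF lin_lmul2])
lemma lin_rmul1_c[lin]: "clinear P \<Longrightarrow> clinear (\<lambda>x. rmul1 c (P x))" by (rule clinear_comp[OF lin_rmul1])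
lemma lin_rmul2_c[lin]: "clinear P \<Longrightarrow> clinear (\<lambda>x. rmul2 c (P x))" by (rule clinear_comp[OF lin_rmul2])

lemma lslice_lmul1: "clinear g \<Longrightarrow> lslice g (lmul1 c X) = m c (lslice g X)"
  by (rule tensor_clinear_eqI[OF clinear_comp[OF clinear_lslice lin_lmul1] clinear_comp[OF lin_r clinear_lslice]])
     (simp_all add: scale_r)

lemma lslice_rmul1: "clinear g \<Longrightarrow> lslice g (rmul1 c X) = m (lslice g X) c"
  by (rule tensor_clinear_eqI[OF clinear_comp[OF clinear_lslice lin_rmul1] clinear_comp[OF lin_l clinear_lslice]])
     (simp_all add: scale_l)

lemma rslice_rmul2: "clinear f \<Longrightarrow> rslice f (rmul2 c X) = m (rslice f X) c"
  by (rule tensor_clinear_eqI[OF clinear_comp[OF clinear_rslice lin_rmul2] clinear_comp[OF lin_l clinear_rslice]])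
     (simp_all add: scale_l)

lemma lmul1_eq: "(\<And>c. lmul1 c X = lmul1 c Y) \<Longrightarrow> X = Y"
proof -
  assume a: "\<And>c. lmul1 c X = lmul1 c Y"
  have "X - Y = 0"
  proof (rule tensor_eq_0_by_leg1_maps[of "\<lambda>c v. m c v"])
    show "clinear (m c)" for c by (rule lin_r)
    show "v = 0" if "\<And>c. m c v = 0" for v using nondeg_r that by blast
    fix c show "tapply (\<lambda>v w. tprod (m c v) w) (X - Y) = 0"
      using a[of c] clinear_diff[OF lin_lmul1, of c X Y] by (simp add: lmul1_def)
  qed
  then show ?thesis by simp
qed

lemma lmul1_tapply_ltens: "clinear G \<Longrightarrow> lmul1 c (tapply (\<lambda>p q. tprod p (G q)) Z) = tapply (\<lambda>p q. tprod p (G q)) (lmul1 c Z)"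
  by (rule tensor_clinear_eqI[OF clinear_comp[OF lin_lmul1 clinear_tapply] clinear_comp[OF clinear_tapply lin_lmul1]])
     (intro lin, assumption, intro lin, assumption, simp add: lin)

lemma tapply_rmul2: assumes F: "cbilinear F" shows "tapply F (rmul2 b Z) = tapply (\<lambda>u v. F u (m v b)) Z"
  unfolding rmul2_def by (simp add: tapply_tapply[OF F] F)
lemma tapply_lmul1: assumes F: "cbilinear F" shows "tapply F (lmul1 b Z) = tapply (\<lambda>u v. F (m b u) v) Z"
  unfolding lmul1_def by (simp add: tapply_tapply[OF F] F)
lemma tapply_lmul2: assumes F: "cbilinear F" shows "tapply F (lmul2 b Z) = tapply (\<lambda>u v. F u (m b v)) Z"
  unfolding lmul2_def by (simp add: tapply_tapply[OF F] F)

end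

section \<open>Regular multiplier Hopf algebras\<close>

locale mult_hopf =
  fixes m :: "'a::cvec \<Rightarrow> 'a \<Rightarrow> 'a" and \<Delta> :: "'a comult"
  assumes rm: "regular_mha m \<Delta>"

sublocale mult_hopf \<subseteq> nondeg_algebra m
  using rm by (unfold_locales) (simp_all add: regular_mha_def)

context mult_hopf
begin

abbreviation "DL a \<equiv> fst (\<Delta> a)"

abbreviation "T1 \<equiv> cov1 m \<Delta>"
abbreviation "T2 \<equiv> cov2 m \<Delta>"
abbreviation "T3 \<equiv> cov3 m \<Delta>"
abbreviation "T4 \<equiv> cov4 m \<Delta>"

lemma Delta_multiplier: "is_multiplier tm (\<Delta> a)" using rm by (simp add: regular_mha_def)
lemma lin_DL[lin]: "clinear (DL a)" using multiplier_clinear[OF Delta_multiplier] by blast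
lemma tm_DL: "tm (DL a X) t = DL a (tm X t)" using Delta_multiplier by (simp add: is_multiplier_def)
lemma DL_mult: "DL (m a b) t = DL a (DL b t)" using rm by (simp add: regular_mha_def mcomp_def)
lemma DL_add: "DL (a + b) t = DL a t + DL b t" using rm by (simp add: regular_mha_def madd_def)
lemma DL_scale: "DL (cscale c a) t = cscale c (DL a t)" using rm by (simp add: regular_mha_def mscale_def)
lemma lin_DLp[lin]: "clinear (\<lambda>a. DL a t)" by (simp add: clinearI DL_add DL_scale)
lemma in_alg_M: "in_alg tm (M1 m \<Delta> a b)" "in_alg tm (M2 m \<Delta> a b)" "in_alg tm (M3 m \<Delta> a b)" "in_alg tm (M4 m \<Delta> a b)"
  using rm by (simp_all add: regular_mha_def)
lemma tm_T1: "tm (T1 a b) t = DL a (lmul2 b t)"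
  unfolding cov1_def using elem_of_fst[OF in_alg_M(1)] by (simp add: M1_def mcomp_def one_ten_def lmul2_def)
lemma tm_T2: "tm (T2 a b) t = lmul1 a (DL b t)"
  unfolding cov2_def using elem_of_fst[OF in_alg_M(2)] by (simp add: M2_def mcomp_def ten_one_def lmul1_def)
lemma tm_T3: "tm (T3 a b) t = DL a (lmul1 b t)"
  unfolding cov3_def using elem_of_fst[OF in_alg_M(3)] by (simp add: M3_def mcomp_def ten_one_def lmul1_def)
lemma tm_T4: "tm (T4 a b) t = lmul2 a (DL b t)"
  unfolding cov4_def using elem_of_fst[OF in_alg_M(4)] by (simp add: M4_def mcomp_def one_ten_def lmul2_def)

lemmas T_simps = tm_T1 tm_T2 tm_T3 tm_T4 tm_lmul1 tm_lmul2 tm_rmul1 tm_rmul2 tm_DL tm_tprod_l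
  lmul1_lmul1 lmul2_lmul2 lmul2_lmul1 DL_mult tm_assoc

lemma lin_T1a[lin]: "clinear (\<lambda>a. T1 a b)"
  by (rule clinearI; rule tm_eq_r) (simp_all add: T_simps DL_add DL_scale clinear_add[OF lin_tm_l] clinear_scale[OF lin_tm_l])

lemma lin_T1b[lin]: "clinear (T1 a)"
  by (rule clinearI; rule tm_eq_r) (simp_all add: T_simps clinear_add[OF lin_tm_l] clinear_scale[OF lin_tm_l]
      clinear_add[OF lin_lmul2c] clinear_scale[OF lin_lmul2c] clinear_add[OF lin_DL] clinear_scale[OF lin_DL])

lemma lin_T2a[lin]: "clinear (\<lambda>a. T2 a b)"
  by (rule clinearI; rule tm_eq_r) (simp_all add: T_simps clinear_add[OF lin_tm_l] clinear_scale[OF lin_tm_l]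
      clinear_add[OF lin_lmul1c] clinear_scale[OF lin_lmul1c])

lemma lin_T2b[lin]: "clinear (T2 a)"
  by (rule clinearI; rule tm_eq_r) (simp_all add: T_simps DL_add DL_scale clinear_add[OF lin_tm_l] clinear_scale[OF lin_tm_l]
      clinear_add[OF lin_lmul1] clinear_scale[OF lin_lmul1])

lemma lin_T3a[lin]: "clinear (\<lambda>a. T3 a b)"
  by (rule clinearI; rule tm_eq_r) (simp_all add: T_simps DL_add DL_scale clinear_add[OF lin_tm_l] clinear_scale[OF lin_tm_l])

lemma lin_T3b[lin]: "clinear (T3 a)"
  by (rule clinearI; rule tm_eq_r) (simp_all add: T_simps clinear_add[OF lin_tm_l] clinear_scale[OF lin_tm_l]
      clinear_add[OF lin_lmul1c] clinear_scale[OF lin_lmul1c] clinear_add[OF lin_DL] clinear_scale[OF lin_DL])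

lemma lin_T4a[lin]: "clinear (\<lambda>a. T4 a b)"
  by (rule clinearI; rule tm_eq_r) (simp_all add: T_simps clinear_add[OF lin_tm_l] clinear_scale[OF lin_tm_l]
      clinear_add[OF lin_lmul2c] clinear_scale[OF lin_lmul2c])

lemma lin_T4b[lin]: "clinear (T4 a)"
  by (rule clinearI; rule tm_eq_r) (simp_all add: T_simps DL_add DL_scale clinear_add[OF lin_tm_l] clinear_scale[OF lin_tm_l]
      clinear_add[OF lin_lmul2] clinear_scale[OF lin_lmul2])

lemma bil_T1[lin]: "cbilinear T1" by (rule cbilinearI) (rule lin_T1b, rule lin_T1a)
lemma bil_T2[lin]: "cbilinear T2" by (rule cbilinearI) (rule lin_T2b, rule lin_T2a)
lemma bil_T3[lin]: "cbilinear T3" by (rule cbilinearI) (rule lin_T3b, rule lin_T3a)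
lemma bil_T4[lin]: "cbilinear T4" by (rule cbilinearI) (rule lin_T4b, rule lin_T4a)
lemma lin_T1a_c[lin]: "clinear P \<Longrightarrow> clinear (\<lambda>x. T1 (P x) b)" by (rule clinear_comp[OF lin_T1a])
lemma lmul1_T1: "lmul1 c (T1 a a') = rmul2 a' (T2 c a)" by (rule tm_eq_r) (simp add: T_simps)
lemma DL_T1: "DL a (T1 b c) = T1 (m a b) c" by (rule tm_eq_r) (simp add: T_simps)
lemma rmul1_T1: "rmul1 c (T1 a b) = rmul2 b (T3 a c)" by (rule tm_eq_r) (simp add: T_simps)
lemma DL_tprod_T1: "DL v (tprod r s) = rmul1 r (T1 v s)" by (rule tm_eq_r) (simp add: T_simps)
lemma DL_tprod_T3: "DL v (tprod r s) = rmul2 s (T3 v r)" by (rule tm_eq_r) (simp add: T_simps)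
lemma lmul1_T4: "lmul1 e (T4 g a) = lmul2 g (T2 e a)" by (rule tm_eq_r) (simp add: T_simps)
lemma lmul2_T1: "lmul2 g (T1 c g') = rmul2 g' (T4 g c)" by (rule tm_eq_r) (simp add: T_simps)
lemma lmul1_T3: "lmul1 y (T3 a x) = rmul1 x (T2 y a)" by (rule tm_eq_r) (simp add: T_simps)
lemma rmul2_T1: "rmul2 d (T1 b c) = T1 b (m c d)" by (rule tm_eq_r) (simp add: T_simps)
lemma coassoc: "tapply (\<lambda>p q. tprod (T2 a p) q) (T1 b c) = tassoc (tapply (\<lambda>u v. tprod u (T1 v c)) (T2 a b))"
  using rm by (simp add: regular_mha_def)

lemma coassoc_lslice:
  assumes g: "clinear g"
  shows "T2 a (lslice g (T1 b c)) = tapply (\<lambda>u v. tprod u (lslice g (T1 v c))) (T2 a b)"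
proof -
  have "T2 a (lslice g (T1 b c)) = tapply (\<lambda>p q. cscale (g q) (T2 a p)) (T1 b c)"
    unfolding lslice_def by (simp add: clinear_comp_tapply[OF lin_T2b] clinear_scale[OF lin_T2b])
  also have "\<dots> = lslice g (tapply (\<lambda>p q. tprod (T2 a p) q) (T1 b c))"
    by (simp add: lslice_tapply[OF g] g)
  also have "\<dots> = lslice g (tassoc (tapply (\<lambda>u v. tprod u (T1 v c)) (T2 a b)))"
    by (simp add: coassoc)
  also have "\<dots> = tapply (\<lambda>u s. tapply (\<lambda>v w. cscale (g w) (tprod u v)) s) (tapply (\<lambda>u v. tprod u (T1 v c)) (T2 a b))"
    by (simp add: tassoc_linear[OF clinear_lslice[OF g]] g)
  also have "\<dots> = tapply (\<lambda>u s. tprod u (lslice g s)) (tapply (\<lambda>u v. tprod u (T1 v c)) (T2 a b))"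
    unfolding lslice_def
    by (rule tapply_cong) (simp add: clinear_comp_tapply[OF clinear_tprod_r] tprod_scale_r)
  also have "\<dots> = tapply (\<lambda>u v. tprod u (lslice g (T1 v c))) (T2 a b)"
    by (subst tapply_tapply) (intro lin g, simp add: lin g)
  finally show ?thesis .
qed

lemma coassoc_rslice:
  assumes f: "clinear f"
  shows "tapply (\<lambda>p q. tprod (rslice f (T2 a p)) q) (T1 b c) = T1 (rslice f (T2 a b)) c"
proof -
  let ?L = "tapply (\<lambda>X q. tprod (rslice f X) q)"
  have L: "clinear ?L" by (intro lin f)
  have "tapply (\<lambda>p q. tprod (rslice f (T2 a p)) q) (T1 b c) = ?L (tapply (\<lambda>p q. tprod (T2 a p) q) (T1 b c))"
    by (simp add: clinear_comp_tapply[OF L] lin f)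
  also have "\<dots> = ?L (tassoc (tapply (\<lambda>u v. tprod u (T1 v c)) (T2 a b)))" by (simp add: coassoc)
  also have "\<dots> = tapply (\<lambda>u s. tapply (\<lambda>v w. tprod (cscale (f u) v) w) s) (tapply (\<lambda>u v. tprod u (T1 v c)) (T2 a b))"
    by (simp add: tassoc_linear[OF L] lin f)
  also have "\<dots> = tapply (\<lambda>u s. cscale (f u) s) (tapply (\<lambda>u v. tprod u (T1 v c)) (T2 a b))"
    by (rule tapply_cong) (simp add: tprod_scale_l tapply_fun_scale tapply_tprod_id)
  also have "\<dots> = tapply (\<lambda>u v. cscale (f u) (T1 v c)) (T2 a b)"
    by (subst tapply_tapply) (intro lin f, simp add: lin f)
  also have "\<dots> = T1 (rslice f (T2 a b)) c"
    unfolding rslice_def by (simp add: clinear_comp_tapply[OF lin_T1a] clinear_scale[OF lin_T1a])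
  finally show ?thesis .
qed

lemma lslice_T1_mult:
  assumes g: "clinear g"
  shows "lslice g (T1 (m v b) b') = tapply (\<lambda>r s. m (lslice g (T1 v s)) r) (T1 b b')"
proof -
  have "tapply (\<lambda>r s. m (lslice g (T1 v s)) r) (T1 b b') = tapply (\<lambda>r s. lslice g (DL v (tprod r s))) (T1 b b')"
    by (rule tapply_cong) (simp add: lslice_rmul1[OF g, symmetric] DL_tprod_T1)
  also have "\<dots> = lslice g (DL v (T1 b b'))"
    by (simp add: lslice_tapply[OF g, symmetric] clinear_comp_tapply[OF lin_DL, symmetric] tapply_tprod_id)
  also have "\<dots> = lslice g (T1 (m v b) b')" by (simp add: DL_T1)
  finally show ?thesis by simp
qed

lemma coassoc_T1:
  assumes g: "clinear g"
  shows "tapply (\<lambda>p q. tprod p (lslice g (T1 q b'))) (T1 a b) = tapply (\<lambda>r s. T1 (lslice g (T1 a s)) r) (T1 b b')"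
proof (rule lmul1_eq)
  fix c
  let ?G = "\<lambda>q. lslice g (T1 q b')"
  have "lmul1 c (tapply (\<lambda>p q. tprod p (?G q)) (T1 a b)) = tapply (\<lambda>p q. tprod p (?G q)) (lmul1 c (T1 a b))"
    by (rule lmul1_tapply_ltens) (intro lin g)
  also have "\<dots> = tapply (\<lambda>p q. tprod p (?G q)) (rmul2 b (T2 c a))" by (simp add: lmul1_T1)
  also have "\<dots> = tapply (\<lambda>u v. tprod u (?G (m v b))) (T2 c a)"
    by (subst tapply_rmul2) (intro lin g, simp)
  also have "\<dots> = tapply (\<lambda>u v. tapply (\<lambda>r s. tprod u (m (lslice g (T1 v s)) r)) (T1 b b')) (T2 c a)"
    by (rule tapply_cong) (simp add: lslice_T1_mult[OF g] clinear_comp_tapply[OF clinear_tprod_r])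
  also have "\<dots> = tapply (\<lambda>r s. rmul2 r (tapply (\<lambda>u v. tprod u (lslice g (T1 v s))) (T2 c a))) (T1 b b')"
    by (subst tapply_swap) (rule tapply_cong, simp add: clinear_comp_tapply[OF lin_rmul2])
  also have "\<dots> = tapply (\<lambda>r s. lmul1 c (T1 (lslice g (T1 a s)) r)) (T1 b b')"
    by (simp add: coassoc_lslice[OF g] lmul1_T1)
  also have "\<dots> = lmul1 c (tapply (\<lambda>r s. T1 (lslice g (T1 a s)) r) (T1 b b'))"
    by (rule clinear_comp_tapply[OF lin_lmul1, symmetric])
  finally show "lmul1 c (tapply (\<lambda>p q. tprod p (?G q)) (T1 a b)) = lmul1 c (tapply (\<lambda>r s. T1 (lslice g (T1 a s)) r) (T1 b b'))" .
qed

lemma bij_T1: "bij (tapply T1)" and bij_T2: "bij (tapply T2)"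
  using rm by (simp_all add: regular_mha_def)

definition T1i where "T1i = inv (tapply T1)"

definition T2i where "T2i = inv (tapply T2)"
lemma T1_T1i[simp]: "tapply T1 (T1i X) = X"
  unfolding T1i_def using bij_T1 by (simp add: bij_def surj_f_inv_f)
lemma T1i_T1[simp]: "T1i (tapply T1 U) = U"
  unfolding T1i_def using bij_T1 by (simp add: bij_def inv_f_f)
lemma T2_T2i[simp]: "tapply T2 (T2i X) = X"
  unfolding T2i_def using bij_T2 by (simp add: bij_def surj_f_inv_f)
lemma T2i_T2[simp]: "T2i (tapply T2 U) = U"
  unfolding T2i_def using bij_T2 by (simp add: bij_def inv_f_f)
lemma lin_T1i[lin]: "clinear T1i" by (rule clinear_inverse[OF clinear_tapply[OF bil_T1]]) simp_all
lemma lin_T2i[lin]: "clinear T2i" by (rule clinear_inverse[OF clinear_tapply[OF bil_T2]]) simp_all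
lemma lin_T2i_c[lin]: "clinear P \<Longrightarrow> clinear (\<lambda>x. T2i (P x))" by (rule clinear_comp[OF lin_T2i])
lemma T1_as_tapply: "T1 a b = tapply T1 (tprod a b)" by (simp add: lin)

lemma clinear_eq_on_T1:
  assumes L: "clinear L" and M: "clinear M" and eq: "\<And>b c. L (T1 b c) = M (T1 b c)"
  shows "L X = M X"
proof -
  have "L X = tapply (\<lambda>b c. L (T1 b c)) (T1i X)"
    using clinear_comp_tapply[OF L, of T1 "T1i X"] by simp
  also have "\<dots> = tapply (\<lambda>b c. M (T1 b c)) (T1i X)" by (simp add: eq)
  also have "\<dots> = M X"
    using clinear_comp_tapply[OF M, of T1 "T1i X"] by simp
  finally show ?thesis .
qed

lemma clinear_eq_on_T2:
  assumes L: "clinear L" and M: "clinear M" and eq: "\<And>b c. L (T2 b c) = M (T2 b c)"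
  shows "L X = M X"
proof -
  have "L X = tapply (\<lambda>b c. L (T2 b c)) (T2i X)"
    using clinear_comp_tapply[OF L, of T2 "T2i X"] by simp
  also have "\<dots> = tapply (\<lambda>b c. M (T2 b c)) (T2i X)" by (simp add: eq)
  also have "\<dots> = M X"
    using clinear_comp_tapply[OF M, of T2 "T2i X"] by simp
  finally show ?thesis .
qed

section \<open>The counit and the antipode\<close>

text \<open>The map \<open>\<epsilon> \<otimes> \<iota>\<close>, available before \<open>\<epsilon>\<close> itself because it must send \<open>\<Delta>(a)(1 \<otimes> b)\<close> to \<open>ab\<close>.\<close>
definition eps_tensor :: "('a, 'a) tensor \<Rightarrow> 'a" where
  "eps_tensor X = tapply m (T1i X)"
lemma lin_eps_tensor[lin]: "clinear eps_tensor"
  unfolding eps_tensor_def by (intro lin)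
lemma eps_tensor_T1: "eps_tensor (T1 a b) = m a b"
  unfolding eps_tensor_def T1_as_tapply[of a b] T1i_T1 by (simp add: lin)

lemma eps_tensor_rslice_T2:
  assumes f: "clinear f"
  shows "eps_tensor (tprod (rslice f (T2 a p)) q) = cscale (f (m a p)) q"
proof -
  define \<Phi> where "\<Phi> p' q' = eps_tensor (tprod (rslice f (T2 a p')) q')" for p' q'
  have bPhi: "cbilinear \<Phi>" unfolding \<Phi>_def by (intro cbilinearI clinear_comp[OF lin_eps_tensor] lin f)
  have \<Phi>_T1: "tapply \<Phi> (T1 b c) = rslice f (lmul1 a (T1 b c))" for b c
  proof -
    have "tapply \<Phi> (T1 b c) = eps_tensor (tapply (\<lambda>p' q'. tprod (rslice f (T2 a p')) q') (T1 b c))"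
      unfolding \<Phi>_def by (rule clinear_comp_tapply[OF lin_eps_tensor, symmetric])
    also have "\<dots> = m (rslice f (T2 a b)) c" by (simp add: coassoc_rslice[OF f] eps_tensor_T1)
    also have "\<dots> = rslice f (lmul1 a (T1 b c))" by (simp add: lmul1_T1 rslice_rmul2 f)
    finally show ?thesis .
  qed
  have "eps_tensor (tprod (rslice f (T2 a p)) q) = tapply \<Phi> (tprod p q)" by (simp add: bPhi \<Phi>_def)
  also have "\<dots> = rslice f (lmul1 a (tprod p q))"
    by (rule clinear_eq_on_T1[OF clinear_tapply[OF bPhi]]) (intro lin f, rule \<Phi>_T1)
  also have "\<dots> = cscale (f (m a p)) q" by (simp add: f)
  finally show ?thesis .
qed

text \<open>Writing \<open>u0 \<otimes> v = T2 V\<close> with \<open>\<omega>(u0) = 1\<close> gives \<open>v = (\<omega> \<otimes> \<iota>)(T2 V)\<close>, whence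
  \<open>(\<epsilon> \<otimes> \<iota>)(v \<otimes> q) = \<omega>(m V) q\<close>.\<close>
lemma eps_tensor_split: "\<exists>\<epsilon>. clinear \<epsilon> \<and> (\<forall>v q. eps_tensor (tprod v q) = cscale (\<epsilon> v) q)"
proof (cases "\<exists>u0::'a. u0 \<noteq> 0")
  case False
  then show ?thesis by (intro exI[of _ "\<lambda>_. 0"]) auto
next
  case True
  then obtain u0 :: 'a where u0: "u0 \<noteq> 0" by blast
  obtain \<omega> :: "'a \<Rightarrow> complex" where om: "clinear \<omega>" "\<omega> u0 = 1"
    using exists_clinear_functional_1[OF u0] by blast
  define \<epsilon> where "\<epsilon> v = \<omega> (tapply m (T2i (tprod u0 v)))" for v
  have "eps_tensor (tprod v q) = cscale (\<epsilon> v) q" for v q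
  proof -
    define V where "V = T2i (tprod u0 v)"
    have V: "tapply T2 V = tprod u0 v" by (simp add: V_def)
    have v: "v = tapply (\<lambda>a p. rslice \<omega> (T2 a p)) V"
      using arg_cong[OF V, of "rslice \<omega>"] by (simp add: rslice_tapply om)
    have "eps_tensor (tprod v q) = tapply (\<lambda>a p. eps_tensor (tprod (rslice \<omega> (T2 a p)) q)) V"
      by (subst v) (rule clinear_comp_tapply[OF clinear_comp[OF lin_eps_tensor clinear_tprod_l]])
    also have "\<dots> = tapply (\<lambda>a p. cscale (\<omega> (m a p)) q) V" by (simp add: eps_tensor_rslice_T2 om)
    also have "\<dots> = cscale (\<omega> (tapply m V)) q"
      by (rule clinear_comp_tapply[OF clinear_scalar_mult[OF om(1)], symmetric])
    finally show ?thesis by (simp add: \<epsilon>_def V_def)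
  qed
  moreover have "clinear \<epsilon>" unfolding \<epsilon>_def by (intro clinear_comp[OF om(1)] lin)
  ultimately show ?thesis by blast
qed

lemma counit_exists:
  "\<exists>\<epsilon>. clinear \<epsilon> \<and> (\<forall>a b. rslice \<epsilon> (T1 a b) = m a b) \<and> (\<forall>a b. lslice \<epsilon> (T2 a b) = m a b)"
proof -
  obtain \<epsilon> where \<epsilon>: "clinear \<epsilon>" and eps_tensor_tprod: "\<And>v q. eps_tensor (tprod v q) = cscale (\<epsilon> v) q"
    using eps_tensor_split by blast
  have eps_tensor_eq: "eps_tensor X = rslice \<epsilon> X" for X
    by (rule tensor_clinear_eqI[OF lin_eps_tensor clinear_rslice[OF \<epsilon>]]) (simp add: eps_tensor_tprod \<epsilon>)
  have "lslice \<epsilon> (T2 a p) = m a p" for a p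
  proof (rule clinear_functionals_separate[where v="lslice \<epsilon> (T2 a p) - m a p", simplified])
    fix f :: "'a \<Rightarrow> complex" assume f: "clinear f"
    have "cscale (f (lslice \<epsilon> (T2 a p))) q = cscale (f (m a p)) q" for q :: 'a
    proof -
      have "cscale (f (lslice \<epsilon> (T2 a p))) q = eps_tensor (tprod (rslice f (T2 a p)) q)"
        by (simp add: eps_tensor_tprod lslice_rslice_swap f \<epsilon>)
      then show ?thesis by (simp add: eps_tensor_rslice_T2 f)
    qed
    then have "f (lslice \<epsilon> (T2 a p)) = f (m a p) \<or> (\<forall>q::'a. q = 0)"
      using cvs.scale_cancel_right by blast
    then show "f (lslice \<epsilon> (T2 a p) - m a p) = 0"
      by (metis clinear_diff[OF f] clinear_0[OF f] right_minus_eq)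
  qed
  then show ?thesis using \<epsilon> eps_tensor_T1 eps_tensor_eq by auto
qed

definition eps where
  "eps = (SOME \<epsilon>. clinear \<epsilon> \<and> (\<forall>a b. rslice \<epsilon> (T1 a b) = m a b) \<and> (\<forall>a b. lslice \<epsilon> (T2 a b) = m a b))"
lemma eps_props: "clinear eps \<and> (\<forall>a b. rslice eps (T1 a b) = m a b) \<and> (\<forall>a b. lslice eps (T2 a b) = m a b)"
  unfolding eps_def by (rule someI_ex[OF counit_exists])
lemma lin_eps[lin]: "clinear eps" using eps_props by blast
lemma rslice_eps_T1: "rslice eps (T1 a b) = m a b" using eps_props by blast
lemma lslice_eps_T2: "lslice eps (T2 a b) = m a b" using eps_props by blast

declare lin_eps[simp] bil_T1[simp] bil_T2[simp] bil_T3[simp] bil_T4[simp] bil[simp]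

lemma rslice_eps_tapply_T1: "rslice eps (tapply T1 U) = tapply m U"
  by (simp add: rslice_tapply rslice_eps_T1)

lemma T1_lmul1: "tapply T1 (lmul1 a U) = DL a (tapply T1 U)"
  by (rule tensor_clinear_eqI[OF clinear_comp[OF clinear_tapply[OF bil_T1] lin_lmul1] clinear_comp[OF lin_DL clinear_tapply[OF bil_T1]]])
     (simp add: DL_T1)

lemma T1_rmul2: "tapply T1 (rmul2 d U) = rmul2 d (tapply T1 U)"
  by (rule tensor_clinear_eqI[OF clinear_comp[OF clinear_tapply[OF bil_T1] lin_rmul2] clinear_comp[OF lin_rmul2 clinear_tapply[OF bil_T1]]])
     (simp add: rmul2_T1)

lemma tapply_m_lmul1: "tapply m (lmul1 a U) = m a (tapply m U)"
  by (simp add: tapply_lmul1 bil assoc clinear_comp_tapply[OF lin_r])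

lemma rslice_eps_DL: "rslice eps (DL a Z) = m a (rslice eps Z)"
proof -
  have "DL a Z = tapply T1 (lmul1 a (T1i Z))" by (simp add: T1_lmul1)
  then show ?thesis by (simp add: rslice_eps_tapply_T1 tapply_m_lmul1 rslice_eps_tapply_T1[of "T1i Z", symmetric])
qed

lemma rslice_eps_T3: "rslice eps (T3 a x) = cscale (eps x) a"
proof (rule eq_by_right)
  fix y
  have "m (rslice eps (T3 a x)) y = rslice eps (rmul2 y (T3 a x))" by (simp add: rslice_rmul2)
  also have "\<dots> = rslice eps (DL a (tprod x y))" by (simp add: DL_tprod_T3)
  also have "\<dots> = m (cscale (eps x) a) y" by (simp add: rslice_eps_DL scale_r scale_l)
  finally show "m (rslice eps (T3 a x)) y = m (cscale (eps x) a) y" .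
qed

lemma lslice_eps_T3: "lslice eps (T3 a x) = m a x"
proof (rule eq_by_left)
  fix y
  have "m y (lslice eps (T3 a x)) = lslice eps (lmul1 y (T3 a x))" by (simp add: lslice_lmul1)
  also have "\<dots> = lslice eps (rmul1 x (T2 y a))" by (simp add: lmul1_T3)
  also have "\<dots> = m y (m a x)" by (simp add: lslice_rmul1 lslice_eps_T2 assoc)
  finally show "m y (lslice eps (T3 a x)) = m y (m a x)" .
qed

lemma eps_mult: "eps (m a x) = eps a * eps x"
proof -
  have "eps (m a x) = eps (lslice eps (T3 a x))" by (simp add: lslice_eps_T3)
  also have "\<dots> = eps (rslice eps (T3 a x))" using lslice_rslice_swap[OF lin_eps lin_eps] by simp
  also have "\<dots> = eps a * eps x" by (simp add: rslice_eps_T3 clinear_scale)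
  finally show ?thesis .
qed

text \<open>\<open>antipode_mul (g \<otimes> c)\<close> is \<open>S(g)c\<close> for the antipode \<open>S\<close>; defining it as \<open>(\<epsilon> \<otimes> \<iota>) \<circ> T1\<inverse>\<close>
  avoids constructing \<open>S\<close>.\<close>
definition antipode_mul where "antipode_mul X = rslice eps (T1i X)"
lemma lin_antipode_mul[lin,simp]: "clinear antipode_mul" unfolding antipode_mul_def by (intro lin)
lemma lin_antipode_mul_c[lin]: "clinear P \<Longrightarrow> clinear (\<lambda>x. antipode_mul (P x))" by (rule clinear_comp[OF lin_antipode_mul])
lemma antipode_mul_T1U: "antipode_mul (tapply T1 U) = rslice eps U" by (simp add: antipode_mul_def)
lemma antipode_mul_T1: "antipode_mul (T1 b c) = cscale (eps b) c"
  using antipode_mul_T1U[of "tprod b c"] by (simp add: lin)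
lemma T1i_rmul2: "T1i (rmul2 d X) = rmul2 d (T1i X)"
  using T1i_T1[of "rmul2 d (T1i X)"] by (simp add: T1_rmul2)
lemma T1i_DL: "T1i (DL w X) = lmul1 w (T1i X)"
  using T1i_T1[of "lmul1 w (T1i X)"] by (simp add: T1_lmul1)
lemma antipode_mul_rmul2: "antipode_mul (rmul2 d X) = m (antipode_mul X) d"
  by (simp add: antipode_mul_def T1i_rmul2 rslice_rmul2)

lemma rslice_eps_lmul1: "rslice eps (lmul1 w U) = cscale (eps w) (rslice eps U)"
  by (rule tensor_clinear_eqI[OF clinear_comp[OF clinear_rslice lin_lmul1] clinear_fun_scale[OF clinear_rslice]])
     (simp_all add: eps_mult cscale_cscale)

lemma antipode_mul_DL: "antipode_mul (DL w Z) = cscale (eps w) (antipode_mul Z)"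
  by (simp add: antipode_mul_def T1i_DL rslice_eps_lmul1)

lemma coassoc_antipode_mul:
  "tapply (\<lambda>p q. tapply (\<lambda>\<alpha> \<beta>. tprod \<alpha> (antipode_mul (tprod \<beta> q))) (T2 e p)) (T1 b d)
     = tapply (\<lambda>u v. tprod u (antipode_mul (T1 v d))) (T2 e b)"
  (is "?Z1 = ?Z2")
proof (rule tensor_eq_rslices)
  fix f :: "'a \<Rightarrow> complex" assume f: "clinear f"
  have "rslice f ?Z1 = tapply (\<lambda>p q. tapply (\<lambda>\<alpha> \<beta>. cscale (f \<alpha>) (antipode_mul (tprod \<beta> q))) (T2 e p)) (T1 b d)"
    by (simp add: rslice_tapply f)
  also have "\<dots> = tapply (\<lambda>p q. antipode_mul (tprod (rslice f (T2 e p)) q)) (T1 b d)"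
    unfolding rslice_def
    by (rule tapply_cong) (simp add: clinear_comp_tapply[OF clinear_comp[OF lin_antipode_mul clinear_tprod_l]]
        tprod_scale_l clinear_scale[OF lin_antipode_mul])
  also have "\<dots> = antipode_mul (tapply (\<lambda>p q. tprod (rslice f (T2 e p)) q) (T1 b d))"
    by (rule clinear_comp_tapply[OF lin_antipode_mul, symmetric])
  also have "\<dots> = antipode_mul (T1 (rslice f (T2 e b)) d)" by (simp add: coassoc_rslice[OF f])
  also have "\<dots> = rslice f ?Z2"
    unfolding rslice_def
    by (simp add: clinear_comp_tapply[OF clinear_comp[OF lin_antipode_mul lin_T1a]] clinear_comp_tapply[OF lin_antipode_mul]
        clinear_scale[OF lin_antipode_mul] clinear_scale[OF lin_T1a] rslice_tapply f tapply_tapply[OF cbilinear_rslice_fun[OF f]] lin)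
  finally show "rslice f ?Z1 = rslice f ?Z2" .
qed

lemma antipode_mul_T2: "tapply (\<lambda>\<alpha> \<beta>. m \<alpha> (antipode_mul (tprod \<beta> c))) (T2 e a) = cscale (eps a) (m e c)"
proof -
  define L where "L W = tapply (\<lambda>a c. tapply (\<lambda>\<alpha> \<beta>. m \<alpha> (antipode_mul (tprod \<beta> c))) (T2 e a)) W" for W
  have bil_inner: "cbilinear (\<lambda>\<alpha> \<beta>. tprod \<alpha> (antipode_mul (tprod \<beta> c)))" for c
    by (intro cbilinearI lin)
  have bil_L: "cbilinear (\<lambda>a c. tapply (\<lambda>\<alpha> \<beta>. m \<alpha> (antipode_mul (tprod \<beta> c))) (T2 e a))"
    by (intro cbilinearI clinear_tapply_param lin)
  have "L W = m e (rslice eps W)" for W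
  proof (rule clinear_eq_on_T1)
    show "clinear L" unfolding L_def by (rule clinear_tapply[OF bil_L])
    show "clinear (\<lambda>W. m e (rslice eps W))" by (intro lin)
    fix b d
    have "L (T1 b d) = tapply m (tapply (\<lambda>p q. tapply (\<lambda>\<alpha> \<beta>. tprod \<alpha> (antipode_mul (tprod \<beta> q))) (T2 e p)) (T1 b d))"
      unfolding L_def by (simp add: tapply_tapply[OF bil] bil_inner bil)
    also have "\<dots> = tapply (\<lambda>u v. m u (cscale (eps v) d)) (T2 e b)"
      by (simp add: coassoc_antipode_mul tapply_tapply[OF bil] bil antipode_mul_T1)
    also have "\<dots> = m (lslice eps (T2 e b)) d"
      unfolding lslice_def by (simp add: clinear_comp_tapply[OF lin_l] scale_r scale_l)
    also have "\<dots> = m e (rslice eps (T1 b d))" by (simp add: lslice_eps_T2 rslice_eps_T1 assoc)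
    finally show "L (T1 b d) = m e (rslice eps (T1 b d))" .
  qed
  from this[of "tprod a c"] show ?thesis by (simp add: L_def bil_L scale_r)
qed

lemma antipode_mul_antimult: "antipode_mul (tprod (m g \<beta>) c) = antipode_mul (tprod \<beta> (antipode_mul (tprod g c)))"
proof -
  define U where "U = T1i (tprod g c)"
  have "tprod (m g \<beta>) c = rmul1 \<beta> (tapply T1 U)" by (simp add: U_def)
  also have "\<dots> = tapply (\<lambda>u u'. rmul1 \<beta> (T1 u u')) U" by (rule clinear_comp_tapply[OF lin_rmul1])
  also have "\<dots> = tapply (\<lambda>u u'. DL u (tprod \<beta> u')) U" by (simp add: DL_tprod_T1)
  finally have e: "tprod (m g \<beta>) c = tapply (\<lambda>u u'. DL u (tprod \<beta> u')) U" .
  have "antipode_mul (tprod (m g \<beta>) c) = tapply (\<lambda>u u'. antipode_mul (DL u (tprod \<beta> u'))) U"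
    by (simp add: e clinear_comp_tapply[OF lin_antipode_mul])
  also have "\<dots> = tapply (\<lambda>u u'. cscale (eps u) (antipode_mul (tprod \<beta> u'))) U" by (simp add: antipode_mul_DL)
  also have "\<dots> = antipode_mul (tprod \<beta> (rslice eps U))"
    unfolding rslice_def
    by (simp add: clinear_comp_tapply[OF clinear_comp[OF lin_antipode_mul clinear_tprod_r]] tprod_scale_r clinear_scale[OF lin_antipode_mul])
  also have "\<dots> = antipode_mul (tprod \<beta> (antipode_mul (tprod g c)))" by (simp add: antipode_mul_def U_def)
  finally show ?thesis .
qed

lemma bil_m_antipode_mul[lin, simp]: "cbilinear (\<lambda>p1 p2. m p1 (antipode_mul (tprod p2 c)))"
  by (intro cbilinearI lin)

lemma antipode_mul_T4: "tapply (\<lambda>p1 p2. m p1 (antipode_mul (tprod p2 c))) (T4 g a) = cscale (eps a) (antipode_mul (tprod g c))"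
proof (rule eq_by_left)
  fix e
  have "m e (tapply (\<lambda>p1 p2. m p1 (antipode_mul (tprod p2 c))) (T4 g a))
      = tapply (\<lambda>p1 p2. m (m e p1) (antipode_mul (tprod p2 c))) (T4 g a)"
    by (simp add: clinear_comp_tapply[OF lin_r] assoc)
  also have "\<dots> = tapply (\<lambda>p1 p2. m p1 (antipode_mul (tprod p2 c))) (lmul1 e (T4 g a))"
    by (simp add: tapply_lmul1)
  also have "\<dots> = tapply (\<lambda>p1 p2. m p1 (antipode_mul (tprod p2 c))) (lmul2 g (T2 e a))" by (simp add: lmul1_T4)
  also have "\<dots> = tapply (\<lambda>\<alpha> \<beta>. m \<alpha> (antipode_mul (tprod (m g \<beta>) c))) (T2 e a)" by (simp add: tapply_lmul2)
  also have "\<dots> = tapply (\<lambda>\<alpha> \<beta>. m \<alpha> (antipode_mul (tprod \<beta> (antipode_mul (tprod g c))))) (T2 e a)" by (simp add: antipode_mul_antimult)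
  also have "\<dots> = cscale (eps a) (m e (antipode_mul (tprod g c)))" by (rule antipode_mul_T2)
  also have "\<dots> = m e (cscale (eps a) (antipode_mul (tprod g c)))" by (simp add: scale_r)
  finally show "m e (tapply (\<lambda>p1 p2. m p1 (antipode_mul (tprod p2 c))) (T4 g a)) = m e (cscale (eps a) (antipode_mul (tprod g c)))" .
qed

lemma trivial_if_eps_zero:
  fixes x :: 'a
  assumes "\<And>p. eps p = 0"
  shows "x = 0"
proof (rule nondeg_l)
  have "rslice eps X = 0" for X by (simp add: rslice_def tapply_def assms)
  then show "m x y = 0" for y by (metis rslice_eps_T1)
qed

lemma antipode_mul_surj: "\<exists>W. antipode_mul W = x"
proof (cases "\<exists>p. eps p \<noteq> 0")
  case True
  then obtain p where p: "eps p \<noteq> 0" by blast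
  show ?thesis by (rule exI[of _ "T1 p (cscale (1 / eps p) x)"]) (simp add: antipode_mul_T1 scale_r cscale_cscale p clinear_scale lin_T1b)
next
  case False
  then show ?thesis using trivial_if_eps_zero[of x] by (intro exI[of _ 0]) (simp add: clinear_0[OF lin_antipode_mul])
qed

end

section \<open>Module algebras and the smash product\<close>

locale module_alg = mult_hopf m \<Delta> for m :: "'a::cvec \<Rightarrow> 'a \<Rightarrow> 'a" and \<Delta> +
  fixes mR :: "'r::cvec \<Rightarrow> 'r \<Rightarrow> 'r" and act :: "'a \<Rightarrow> 'r \<Rightarrow> 'r"
  assumes ma: "module_algebra m \<Delta> mR act"

sublocale module_alg \<subseteq> R: nondeg_algebra mR
  using ma by unfold_locales (simp_all add: module_algebra_def)

context module_alg
begin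

lemma bil_act[lin, simp]: "cbilinear act" using ma by (simp add: module_algebra_def left_module_def)
lemma act_m: "act (m a a') x = act a (act a' x)" using ma by (simp add: module_algebra_def left_module_def)
lemma act_unital: "\<exists>ps. x = (\<Sum>(a, y)\<leftarrow>ps. act a y)" using ma by (simp add: module_algebra_def unital_action_def)
lemma module_algebra_law: "act a (mR x (\<Sum>(c, y)\<leftarrow>cs. act c y)) = (\<Sum>(c, y)\<leftarrow>cs. tapply (\<lambda>p q. mR (act p x) (act q y)) (T1 a c))"
  using ma unfolding module_algebra_def by blast
lemma module_algebra_law_single: "act a (mR x (act c y)) = tapply (\<lambda>p q. mR (act p x) (act q y)) (T1 a c)"
  using module_algebra_law[of a x "[(c, y)]"] by simp
lemma lin_act_l[lin]: "clinear (\<lambda>a. act a y)" by (rule cbilinear_l[OF bil_act])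
lemma lin_act_r[lin]: "clinear (act a)" by (rule cbilinear_r[OF bil_act])
lemma lin_act_l_c[lin]: "clinear P \<Longrightarrow> clinear (\<lambda>x. act (P x) y)" by (rule clinear_comp[OF lin_act_l])
lemma act_0r[simp]: "act a 0 = 0" by (rule clinear_0[OF lin_act_r])

declare R.bil[simp]

lemma tensor_act_annihilated:
  assumes y0: "\<And>e. act e y = 0" and y: "y = (\<Sum>(c, z)\<leftarrow>cs. act c z)"
  shows "(\<Sum>(c, z)\<leftarrow>cs. tapply (\<lambda>u v. tprod u (act v z)) (T1 b c)) = 0"
    (is "?Z = 0")
proof (rule tensor_eq_0_by_leg1_maps[of "\<lambda>g u. m g u"])
  show "clinear (m g)" for g by (rule lin_r)
  show "v = 0" if "\<And>g. m g v = 0" for v using nondeg_r that by blast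
  fix g
  have bZ: "cbilinear (\<lambda>u v. tprod u (act v z))" for z by (intro lin)
  have "tapply (\<lambda>v w. tprod (m g v) w) ?Z = (\<Sum>(c, z)\<leftarrow>cs. tapply (\<lambda>u v. tprod u (act v z)) (lmul1 g (T1 b c)))"
    by (simp add: clinear_sum_list[OF clinear_tapply[OF bil_lmul1[unfolded lmul1_def]]] split_def
        tapply_tapply lin bZ tapply_lmul1)
  also have "\<dots> = tapply (\<lambda>u v. \<Sum>(c, z)\<leftarrow>cs. tprod u (act (m v c) z)) (T2 g b)"
    by (simp add: lmul1_T1 tapply_rmul2 bZ sum_list_tapply split_def)
  also have "\<dots> = tapply (\<lambda>u v. tprod u (act v y)) (T2 g b)"
    by (rule tapply_cong)
       (simp add: y clinear_sum_list[OF clinear_tprod_r, symmetric] clinear_sum_list[OF lin_act_r] split_def act_m)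
  also have "\<dots> = 0" by (simp add: y0)
  finally show "tapply (\<lambda>v w. tprod (m g v) w) ?Z = 0" .
qed

lemma eps_mult_act:
  "cscale (eps (m f b)) (act c z) = tapply (\<lambda>u v. act (antipode_mul (T3 f u)) (act v z)) (T1 b c)"
proof -
  have "T1 (m f b) c = tapply (\<lambda>u v. rmul2 v (T3 f u)) (T1 b c)"
    by (simp add: DL_T1[symmetric] DL_tprod_T3[symmetric] clinear_comp_tapply[OF lin_DL, symmetric] tapply_tprod_id)
  then have "act (antipode_mul (T1 (m f b) c)) z = tapply (\<lambda>u v. act (antipode_mul (rmul2 v (T3 f u))) z) (T1 b c)"
    by (simp add: clinear_comp_tapply[OF lin_act_l_c[OF lin_antipode_mul]])
  then show ?thesis
    by (simp add: antipode_mul_rmul2 act_m antipode_mul_T1 clinear_scale[OF lin_act_l])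
qed

text \<open>If \<open>A y = 0\<close>, writing \<open>y = \<Sum> c z\<close> by unitality gives \<open>\<epsilon>(fb) y = 0\<close> for all \<open>f\<close>, \<open>b\<close>;
  as \<open>\<epsilon>\<close> is multiplicative and non-zero (unless \<open>A = 0\<close>), \<open>y = 0\<close>.\<close>
lemma act_nondeg:
  assumes y0: "\<And>e. act e y = 0"
  shows "y = 0"
proof -
  obtain cs where cs: "y = (\<Sum>(c, z)\<leftarrow>cs. act c z)" using act_unital by blast
  have eps_y: "cscale (eps (m f b)) y = 0" for f b
  proof -
    have bb: "cbilinear (\<lambda>u r. act (antipode_mul (T3 f u)) r)" by (intro cbilinearI lin)
    have bZ: "cbilinear (\<lambda>u v. tprod u (act v z))" for z by (intro lin)
    have "cscale (eps (m f b)) y = (\<Sum>(c, z)\<leftarrow>cs. tapply (\<lambda>u v. act (antipode_mul (T3 f u)) (act v z)) (T1 b c))"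
      by (simp add: cs cscale_sum_list split_def eps_mult_act)
    also have "\<dots> = tapply (\<lambda>u r. act (antipode_mul (T3 f u)) r) (\<Sum>(c, z)\<leftarrow>cs. tapply (\<lambda>u v. tprod u (act v z)) (T1 b c))"
      by (simp add: clinear_sum_list[OF clinear_tapply[OF bb]] split_def tapply_tapply[OF bb] bZ bb)
    also have "\<dots> = 0" by (simp add: tensor_act_annihilated[OF y0 cs] bb)
    finally show ?thesis .
  qed
  show ?thesis
  proof (cases "\<exists>p. eps p \<noteq> 0")
    case True
    then obtain p where p: "eps p \<noteq> 0" by blast
    then show ?thesis using eps_y[of p p] by (simp add: eps_mult)
  next
    case False
    then have "act a z = 0" for a z
      using trivial_if_eps_zero[of a] clinear_0[OF lin_act_l] by auto
    then show ?thesis by (simp add: cs split_def)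
  qed
qed

lemma act_nondeg_tensor:
  fixes Y :: "('r, 'b::cvec) tensor"
  assumes "\<And>e. tapply (\<lambda>y b. tprod (act e y) b) Y = 0"
  shows "Y = 0"
  by (rule tensor_eq_0_by_leg1_maps[of act]) (simp_all add: lin act_nondeg assms)

abbreviation "SM \<equiv> smash_mult m \<Delta> mR act"

lemma bil_smash_inner[lin, simp]: "cbilinear (\<lambda>p q. tprod (mR x (act p x')) q)"
  by (intro cbilinearI lin)
lemma bil_smash_middle[lin, simp]: "cbilinear (\<lambda>x' a'. tapply (\<lambda>p q. tprod (mR x (act p x')) q) (T1 a a'))"
  by (intro cbilinearI clinear_tapply_param lin)
lemma bil_smash_outer[lin, simp]: "cbilinear (\<lambda>x a. tapply (\<lambda>x' a'. tapply (\<lambda>p q. tprod (mR x (act p x')) q) (T1 a a')) Y)"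
  by (intro cbilinearI clinear_tapply_param lin)
lemma SM_eq_tapply: "SM X Y = tapply (\<lambda>x a. tapply (\<lambda>x' a'. tapply (\<lambda>p q. tprod (mR x (act p x')) q) (T1 a a')) Y) X"
  by (simp add: smash_mult_def)
lemma SM_tprod_l: "SM (tprod x a) Y = tapply (\<lambda>x' a'. tapply (\<lambda>p q. tprod (mR x (act p x')) q) (T1 a a')) Y"
  by (simp add: SM_eq_tapply)
lemma SM_tprod: "SM (tprod x a) (tprod x' a') = tapply (\<lambda>p q. tprod (mR x (act p x')) q) (T1 a a')"
  by (simp add: SM_tprod_l)
lemma lin_SM_l[lin]: "clinear (\<lambda>X. SM X Y)" unfolding SM_eq_tapply by (intro lin)
lemma lin_SM_r[lin]: "clinear (SM X)" unfolding SM_eq_tapply by (intro clinear_tapply_param lin)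
lemma bil_SM[lin, simp]: "cbilinear SM" by (intro cbilinearI lin_SM_r lin_SM_l)

definition smash_term :: "'r \<Rightarrow> 'r \<Rightarrow> ('a, 'a) tensor \<Rightarrow> ('r, 'a) tensor" where
  "smash_term x y W = tapply (\<lambda>p q. tprod (mR x (act p y)) q) W"
lemma lin_smash_term[lin]: "clinear (smash_term x y)"
  unfolding smash_term_def by (intro lin)
lemma SM_tprod_smash_term: "SM (tprod x a) (tprod y b) = smash_term x y (T1 a b)"
  by (simp add: SM_tprod smash_term_def)
lemma SM_tprod_right: "SM X (tprod y b) = tapply (\<lambda>x a. smash_term x y (T1 a b)) X"
  by (simp add: SM_eq_tapply smash_term_def)

lemma smash_term_leg2:
  assumes G: "clinear \<Gamma>"
  shows "smash_term x y (tapply (\<lambda>p q. tprod p (\<Gamma> q)) W) = tapply (\<lambda>z q. tprod z (\<Gamma> q)) (smash_term x y W)"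
  by (rule tensor_clinear_eqI[OF clinear_comp[OF lin_smash_term clinear_tapply] clinear_comp[OF clinear_tapply lin_smash_term]])
     (intro lin G, intro lin G, simp add: smash_term_def lin G)

lemma SM_assoc_tprod:
  "SM (SM (tprod x a) (tprod x' a')) (tprod x'' a'') = SM (tprod x a) (SM (tprod x' a') (tprod x'' a''))"
  (is "?L = ?R")
proof (rule tensor_eq_lslices)
  fix g :: "'a \<Rightarrow> complex" assume g: "clinear g"
  define \<psi> where "\<psi> p p' = mR (mR x (act p x')) (act p' x'')" for p p'
  have bpsi: "cbilinear \<psi>" unfolding \<psi>_def by (intro cbilinearI lin)
  have psi_ls: "\<psi> p (lslice g W) = tapply (\<lambda>p' q'. cscale (g q') (\<psi> p p')) W" for p W
    unfolding lslice_def by (simp add: clinear_comp_tapply[OF cbilinear_r[OF bpsi]] clinear_scale[OF cbilinear_r[OF bpsi]])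
  have "lslice g ?L = lslice g (tapply (\<lambda>p q. SM (tprod (mR x (act p x')) q) (tprod x'' a'')) (T1 a a'))"
    by (simp add: SM_tprod clinear_comp_tapply[OF lin_SM_l])
  also have "\<dots> = tapply (\<lambda>p q. tapply (\<lambda>p' q'. cscale (g q') (\<psi> p p')) (T1 q a'')) (T1 a a')"
    by (simp add: SM_tprod lslice_tapply g \<psi>_def)
  also have "\<dots> = tapply (\<lambda>p q. \<psi> p (lslice g (T1 q a''))) (T1 a a')"
    by (simp add: psi_ls)
  also have "\<dots> = tapply \<psi> (tapply (\<lambda>p q. tprod p (lslice g (T1 q a''))) (T1 a a'))"
    by (simp add: tapply_tapply[OF bpsi] bpsi)
  also have "\<dots> = tapply \<psi> (tapply (\<lambda>r s. T1 (lslice g (T1 a s)) r) (T1 a' a''))"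
    by (simp add: coassoc_T1[OF g])
  also have "\<dots> = tapply (\<lambda>r s. tapply \<psi> (T1 (lslice g (T1 a s)) r)) (T1 a' a'')"
    by (rule tapply_tapply[OF bpsi])
  also have "\<dots> = tapply (\<lambda>r s. tapply (\<lambda>p q. cscale (g q) (tapply \<psi> (T1 p r))) (T1 a s)) (T1 a' a'')"
    unfolding lslice_def
    by (rule tapply_cong)
       (simp add: clinear_comp_tapply[OF clinear_comp[OF clinear_tapply[OF bpsi] lin_T1a]]
        clinear_scale[OF clinear_comp[OF clinear_tapply[OF bpsi] lin_T1a]])
  also have "\<dots> = tapply (\<lambda>r s. tapply (\<lambda>p q. cscale (g q) (mR x (act p (mR x' (act r x''))))) (T1 a s)) (T1 a' a'')"
    by (simp add: module_algebra_law_single \<psi>_def[abs_def] clinear_comp_tapply[OF R.lin_r] R.assoc)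
  also have "\<dots> = lslice g ?R"
    by (simp add: SM_tprod clinear_comp_tapply[OF lin_SM_r] lslice_tapply g)
  finally show "lslice g ?L = lslice g ?R" .
qed

lemma SM_assoc: "SM (SM X Y) Z = SM X (SM Y Z)"
proof -
  have step3: "SM (SM (tprod x a) (tprod x' a')) Z = SM (tprod x a) (SM (tprod x' a') Z)" for x a x' a' Z
    by (rule tensor_clinear_eqI[OF lin_SM_r clinear_comp[OF lin_SM_r lin_SM_r]]) (rule SM_assoc_tprod)
  have step2: "SM (SM (tprod x a) Y) Z = SM (tprod x a) (SM Y Z)" for x a Y
    by (rule tensor_clinear_eqI[OF clinear_comp[OF lin_SM_l lin_SM_r] clinear_comp[OF lin_SM_r lin_SM_l]]) (rule step3)
  show ?thesis
    by (rule tensor_clinear_eqI[OF clinear_comp[OF lin_SM_l lin_SM_l] lin_SM_l]) (rule step2)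
qed

text \<open>If \<open>(R # A)Y = 0\<close> then \<open>\<Sum> a_(1)y \<otimes> a_(2)b = 0\<close> for all \<open>a\<close>, and bijectivity of \<open>T2\<close> turns
  this into \<open>\<Sum> e y \<otimes> g b = 0\<close> for all \<open>e\<close>, \<open>g\<close>.\<close>
lemma SM_nondeg_right:
  assumes Y0: "\<And>X. SM X Y = 0"
  shows "Y = 0"
proof -
  define Q where "Q W = tapply (\<lambda>y b. tapply (\<lambda>p q. tprod (act p y) q) (rmul2 b W)) Y" for W
  have bQ: "cbilinear (\<lambda>p q. tprod (act p y) q)" for y by (intro cbilinearI lin)
  have bQ2: "cbilinear (\<lambda>z q. tprod (mR x z) q)" for x by (intro cbilinearI lin)
  have bQ3: "cbilinear (\<lambda>z q. tprod (act e z) q)" for e by (intro cbilinearI lin)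
  have Q_T1: "tapply (\<lambda>y b. tapply (\<lambda>p q. tprod (act p y) q) (T1 a b)) Y = 0" for a
  proof (rule tensor_eq_0_by_leg1_maps[of "\<lambda>x z. mR x z"])
    show "clinear (mR x)" for x by (rule R.lin_r)
    show "v = 0" if "\<And>x. mR x v = 0" for v using R.nondeg_r that by blast
    show "tapply (\<lambda>z q. tprod (mR x z) q) (tapply (\<lambda>y b. tapply (\<lambda>p q. tprod (act p y) q) (T1 a b)) Y) = 0" for x
      using Y0[of "tprod x a"] unfolding SM_tprod_l by (simp add: tapply_tapply[OF bQ2] bQ2 bQ)
  qed
  have Q0: "Q W = 0" for W
  proof (rule clinear_eq_on_T2)
    show "clinear Q" unfolding Q_def by (intro clinear_tapply_param lin bQ)
    fix e a
    have "Q (T2 e a) = tapply (\<lambda>z q. tprod (act e z) q) (tapply (\<lambda>y b. tapply (\<lambda>p q. tprod (act p y) q) (T1 a b)) Y)"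
      unfolding Q_def by (simp add: lmul1_T1[symmetric] tapply_tapply[OF bQ3] bQ3 bQ tapply_lmul1 act_m)
    then show "Q (T2 e a) = (\<lambda>W. 0) (T2 e a)" by (simp add: Q_T1 bQ3)
  qed simp
  show ?thesis
  proof (rule act_nondeg_tensor)
    fix e
    show "tapply (\<lambda>y b. tprod (act e y) b) Y = 0"
    proof (rule tensor_eq_0_by_leg2_maps[of "\<lambda>g w. m g w"])
      show "clinear (m g)" for g by (rule lin_r)
      show "v = 0" if "\<And>g. m g v = 0" for v using nondeg_r that by blast
      show "tapply (\<lambda>v w. tprod v (m g w)) (tapply (\<lambda>y b. tprod (act e y) b) Y) = 0" for g
        using Q0[of "tprod e g"] unfolding Q_def by (simp add: tapply_tapply[OF bil_lmul2[unfolded lmul2_def]] lin bQ)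
    qed
  qed
qed

lemma SM_left_annihilator_T1:
  assumes X0: "\<And>Y. SM X Y = 0" and phi: "clinear \<phi>"
  shows "tapply (\<lambda>x a. smash_term x y (T1 (lslice \<phi> (T1 a h)) g')) X = 0"
proof -
  define U where "U = T1i (tprod g' h)"
  define \<Gamma> where "\<Gamma> b' q = lslice \<phi> (T1 q b')" for b' q
  have lG: "clinear (\<Gamma> b')" for b' unfolding \<Gamma>_def by (intro lin phi)
  have bG: "cbilinear (\<lambda>p q. tprod p (\<Gamma> b' q))" for b' by (intro cbilinearI lin lG)
  have U_coassoc: "T1 (lslice \<phi> (T1 a h)) g' = tapply (\<lambda>b b'. tapply (\<lambda>p q. tprod p (\<Gamma> b' q)) (T1 a b)) U" for a
  proof -
    have bb: "cbilinear (\<lambda>r s. T1 (lslice \<phi> (T1 a s)) r)" by (intro cbilinearI lin phi)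
    have "tapply (\<lambda>b b'. tapply (\<lambda>p q. tprod p (\<Gamma> b' q)) (T1 a b)) U
        = tapply (\<lambda>r s. T1 (lslice \<phi> (T1 a s)) r) (tapply T1 U)"
      unfolding \<Gamma>_def by (simp add: coassoc_T1[OF phi] tapply_tapply[OF bb])
    then show ?thesis by (simp add: U_def bb)
  qed
  have "tapply (\<lambda>x a. smash_term x y (T1 (lslice \<phi> (T1 a h)) g')) X
      = tapply (\<lambda>x a. tapply (\<lambda>b b'. smash_term x y (tapply (\<lambda>p q. tprod p (\<Gamma> b' q)) (T1 a b))) U) X"
    by (simp add: U_coassoc clinear_comp_tapply[OF lin_smash_term])
  also have "\<dots> = tapply (\<lambda>x a. tapply (\<lambda>b b'. tapply (\<lambda>z q. tprod z (\<Gamma> b' q)) (smash_term x y (T1 a b))) U) X"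
    by (simp add: smash_term_leg2[OF lG])
  also have "\<dots> = tapply (\<lambda>b b'. tapply (\<lambda>z q. tprod z (\<Gamma> b' q)) (tapply (\<lambda>x a. smash_term x y (T1 a b)) X)) U"
    by (subst tapply_swap) (simp add: clinear_comp_tapply[OF clinear_tapply[OF bG]])
  also have "\<dots> = 0" using X0 by (simp add: SM_tprod_right[symmetric] bG)
  finally show ?thesis .
qed

lemma SM_left_annihilator_T4:
  assumes X0: "\<And>Y. SM X Y = 0" and phi: "clinear \<phi>"
  shows "tapply (\<lambda>x a. smash_term x y (T4 g (lslice \<phi> (T1 a h)))) X = 0"
proof (rule tensor_eq_0_by_leg2_maps[of "\<lambda>g' q. m q g'"])
  show "clinear (\<lambda>q. m q g')" for g' by (rule lin_l)
  show "v = 0" if "\<And>g'. m v g' = 0" for v using nondeg_l that by blast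
  fix g'
  have bR: "cbilinear (\<lambda>z q. tprod z (m q g'))" by (intro cbilinearI lin)
  have bL: "cbilinear (\<lambda>z q. tprod z (m g q))" by (intro cbilinearI lin)
  have "tapply (\<lambda>v w. tprod v (m w g')) (tapply (\<lambda>x a. smash_term x y (T4 g (lslice \<phi> (T1 a h)))) X)
      = tapply (\<lambda>x a. smash_term x y (rmul2 g' (T4 g (lslice \<phi> (T1 a h))))) X"
    unfolding rmul2_def by (simp add: tapply_tapply[OF bR] smash_term_leg2[OF lin_l])
  also have "\<dots> = tapply (\<lambda>x a. smash_term x y (lmul2 g (T1 (lslice \<phi> (T1 a h)) g'))) X"
    by (simp add: lmul2_T1)
  also have "\<dots> = tapply (\<lambda>z q. tprod z (m g q)) (tapply (\<lambda>x a. smash_term x y (T1 (lslice \<phi> (T1 a h)) g')) X)"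
    unfolding lmul2_def by (simp add: smash_term_leg2[OF lin_r] tapply_tapply[OF bL])
  also have "\<dots> = 0" by (simp add: SM_left_annihilator_T1[OF X0 phi] bL)
  finally show "tapply (\<lambda>v w. tprod v (m w g')) (tapply (\<lambda>x a. smash_term x y (T4 g (lslice \<phi> (T1 a h)))) X) = 0" .
qed

lemma act_antipode_mul_T4:
  "tapply (\<lambda>p1 p2. mR x (act p1 (act (antipode_mul (tprod p2 c0)) z0))) (T4 g c)
     = cscale (eps c) (mR x (act (antipode_mul (tprod g c0)) z0))"
proof -
  have "tapply (\<lambda>p1 p2. mR x (act p1 (act (antipode_mul (tprod p2 c0)) z0))) (T4 g c)
      = mR x (act (tapply (\<lambda>p1 p2. m p1 (antipode_mul (tprod p2 c0))) (T4 g c)) z0)"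
    by (simp add: clinear_comp_tapply[OF clinear_comp[OF R.lin_r lin_act_l]] act_m)
  then show ?thesis by (simp add: antipode_mul_T4 clinear_scale[OF lin_act_l] R.scale_r)
qed

lemma SM_left_annihilator_mult:
  assumes X0: "\<And>Y. SM X Y = 0"
  shows "tapply (\<lambda>x a. tprod (mR x (act (antipode_mul (tprod g c0)) z0)) (m a h)) X = 0"
proof (rule tensor_zero_lslices)
  fix \<phi> :: "'a \<Rightarrow> complex" assume phi: "clinear \<phi>"
  define w where "w = act (antipode_mul (tprod g c0)) z0"
  define Zc where "Zc = tapply (\<lambda>x a. tapply (\<lambda>p1 p2. tprod (tprod x p1) p2) (T4 g (lslice \<phi> (T1 a h)))) X"
  define B where "B u y = tapply (\<lambda>x p. mR x (act p y)) u" for u y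
  define \<rho> where "\<rho> r = act (antipode_mul (tprod r c0)) z0" for r
  have bB0: "cbilinear (\<lambda>x p. mR x (act p y))" for y by (intro cbilinearI lin)
  have lB: "clinear (B u)" for u unfolding B_def by (intro clinear_tapply_param lin)
  have lBu: "clinear (\<lambda>u. B u y)" for y unfolding B_def by (intro lin bB0)
  have lrho: "clinear \<rho>" unfolding \<rho>_def by (intro lin)
  have bdata: "cbilinear (\<lambda>u r. tprod (B u y) r)" for y by (intro cbilinearI lin lBu)
  have bconc: "cbilinear (\<lambda>u r. B u (\<rho> r))" by (intro cbilinearI clinear_comp[OF lB lrho] lin lBu)
  have "tapply (\<lambda>u r. tprod (B u y) r) Zc = tapply (\<lambda>x a. smash_term x y (T4 g (lslice \<phi> (T1 a h)))) X" for y
    unfolding Zc_def smash_term_def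
    by (simp only: tapply_tapply[OF bdata]) (simp add: bdata[unfolded B_def] B_def bB0)
  then have "tapply (\<lambda>u r. B u (\<rho> r)) Zc = 0"
    by (intro tapply_eq_0_through_leg2[OF lB _ lrho]) (simp add: SM_left_annihilator_T4[OF X0 phi])
  then have "0 = tapply (\<lambda>x a. tapply (\<lambda>p1 p2. mR x (act p1 (\<rho> p2))) (T4 g (lslice \<phi> (T1 a h)))) X"
    unfolding Zc_def by (simp only: tapply_tapply[OF bconc]) (simp add: bconc[unfolded B_def] B_def bB0)
  also have "\<dots> = tapply (\<lambda>x a. cscale (\<phi> (m a h)) (mR x w)) X"
    unfolding \<rho>_def w_def
    by (simp add: act_antipode_mul_T4 lslice_rslice_swap[OF lin_eps phi, symmetric] rslice_eps_T1)
  also have "\<dots> = lslice \<phi> (tapply (\<lambda>x a. tprod (mR x w) (m a h)) X)"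
    by (simp add: lslice_tapply phi)
  finally show "lslice \<phi> (tapply (\<lambda>x a. tprod (mR x (act (antipode_mul (tprod g c0)) z0)) (m a h)) X) = 0"
    by (simp add: w_def)
qed

text \<open>Let \<open>X = \<Sum> x_i \<otimes> a_i\<close> with \<open>X(R # A) = 0\<close>. Coassociativity, the multiplier \<open>1 \<otimes> g\<close> and the
  antipode identity \<open>\<Sum> a_(1)S(a_(2)) = \<epsilon>(a)\<close> give \<open>\<Sum> x_i w \<otimes> a_i = 0\<close> for every \<open>w = S(g)c z\<close>;
  such \<open>w\<close> span \<open>R\<close> since \<open>S(g)c\<close> ranges over \<open>A\<close> and the action is unital.\<close>
lemma SM_nondeg_left:
  assumes X0: "\<And>Y. SM X Y = 0"
  shows "X = 0"
proof -
  define K where "K w = tapply (\<lambda>x a. tprod (mR x w) a) X" for w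
  have lK: "clinear K" unfolding K_def by (intro clinear_tapply_param lin)
  have K_antipode: "K (act (antipode_mul (tprod g c0)) z0) = 0" for g c0 z0
  proof (rule tensor_eq_0_by_leg2_maps[of "\<lambda>h a. m a h"])
    show "clinear (\<lambda>a. m a h)" for h by (rule lin_l)
    show "v = 0" if "\<And>h. m v h = 0" for v using nondeg_l that by blast
    have bb: "cbilinear (\<lambda>v w'. tprod v (m w' h))" for h by (intro cbilinearI lin)
    show "tapply (\<lambda>v w'. tprod v (m w' h)) (K (act (antipode_mul (tprod g c0)) z0)) = 0" for h
      unfolding K_def using SM_left_annihilator_mult[OF X0] by (simp add: tapply_tapply[OF bb] lin)
  qed
  have "K (act e z0) = 0" for e z0
  proof -
    obtain W where W: "antipode_mul W = e" using antipode_mul_surj by blast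
    have "K (act (antipode_mul W) z0) = 0"
      by (rule tensor_clinear_eqI[OF clinear_comp[OF lK lin_act_l_c[OF lin_antipode_mul]] clinear_zero_fun])
         (simp add: K_antipode)
    then show ?thesis using W by simp
  qed
  then have K0: "K w = 0" for w
    using act_unital[of w] by (auto simp: clinear_sum_list[OF lK] split_def)
  show ?thesis
  proof (rule tensor_eq_0_by_leg1_maps[of "\<lambda>w x. mR x w"])
    show "clinear (\<lambda>x. mR x w)" for w by (rule R.lin_l)
    show "v = 0" if "\<And>w. mR v w = 0" for v using R.nondeg_l that by blast
    show "tapply (\<lambda>v wa. tprod (mR v w) wa) X = 0" for w using K0[of w] by (simp add: K_def)
  qed
qed

lemma SM_nondeg: "nondeg SM"
  unfolding nondeg_def using SM_nondeg_left SM_nondeg_right by blast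
lemma SM_is_alg: "is_alg SM"
  unfolding is_alg_def using bil_SM SM_assoc by blast

end

section \<open>Dual pairs and the smash action\<close>

locale paired_module_alg = module_alg mA \<Delta>A mR act + B: mult_hopf mB \<Delta>B
  for mA :: "'a::cvec \<Rightarrow> 'a \<Rightarrow> 'a" and \<Delta>A and mR :: "'r::cvec \<Rightarrow> 'r \<Rightarrow> 'r" and act
    and mB :: "'b::cvec \<Rightarrow> 'b \<Rightarrow> 'b" and \<Delta>B +
  fixes pr :: "'a \<Rightarrow> 'b \<Rightarrow> complex"
  assumes dp: "dual_pair mA \<Delta>A mB \<Delta>B pr"
begin

abbreviation "tri \<equiv> tri_BA mA \<Delta>A pr"
abbreviation "triAB \<equiv> tri_AB mB \<Delta>B pr"

lemma bil_pr[lin, simp]: "cbilinear pr" using dp by (simp add: dual_pair_def)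
lemma lin_pr_l[lin]: "clinear (\<lambda>a. pr a b)" by (rule cbilinear_l[OF bil_pr])
lemma lin_pr_r[lin]: "clinear (pr a)" by (rule cbilinear_r[OF bil_pr])
lemma pr_nondeg_A: "(\<And>b. pr a b = 0) \<Longrightarrow> a = 0" using dp unfolding dual_pair_def by blast
lemma pr_nondeg_B: "(\<And>a. pr a b = 0) \<Longrightarrow> b = 0" using dp unfolding dual_pair_def by blast
lemma pr_tri: "pr (tri b a) b' = pr a (mB b' b)" using dp unfolding dual_pair_def by blast
lemma pr_triAB: "pr a' (triAB a b) = pr (mA a' a) b" using dp unfolding dual_pair_def by blast
lemma tri_unital: "\<exists>ps. a = (\<Sum>(b, a')\<leftarrow>ps. tri b a')"
  using dp unfolding dual_pair_def unital_action_def by blast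
lemma in_alg_r: "in_alg mA (ractM mA \<Delta>A pr b a)" "in_alg mB (ractM mB \<Delta>B (\<lambda>x y. pr y x) a b)"
  using dp unfolding dual_pair_def by blast+
lemma pr_cancel_A: "(\<And>b. pr a b = pr a' b) \<Longrightarrow> a = a'"
  using pr_nondeg_A[of "a - a'"] by (simp add: clinear_diff[OF lin_pr_l])
lemma pr_cancel_B: "(\<And>a. pr a b = pr a b') \<Longrightarrow> b = b'"
  using pr_nondeg_B[of "b - b'"] by (simp add: clinear_diff[OF lin_pr_r])

lemma tri_char: "mA (tri b a) c = tapply (\<lambda>p q. cscale (pr q b) p) (T3 a c)"
proof -
  have "ractM mA \<Delta>A pr b a = mult_of mA (tri b a)"
    using in_alg_elem_of[OF in_alg_r(1)] by (simp add: tri_BA_def)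
  then show ?thesis by (simp add: ractM_def mult_of_def fun_eq_iff)
qed

lemma triAB_char: "mB e (triAB a b) = tapply (\<lambda>p q. cscale (pr a q) p) (B.T2 e b)"
proof -
  have "ractM mB \<Delta>B (\<lambda>x y. pr y x) a b = mult_of mB (triAB a b)"
    using in_alg_elem_of[OF in_alg_r(2)] by (simp add: tri_AB_def)
  then show ?thesis by (simp add: ractM_def mult_of_def fun_eq_iff)
qed

lemma lin_tri_b[lin]: "clinear (\<lambda>b. tri b a)"
  by (rule clinearI; rule pr_cancel_A)
     (simp_all add: pr_tri clinear_add[OF lin_pr_l] clinear_scale[OF lin_pr_l] B.add_r B.scale_r
       clinear_add[OF lin_pr_r] clinear_scale[OF lin_pr_r])

lemma lin_tri_a[lin]: "clinear (tri b)"
  by (rule clinearI; rule pr_cancel_A)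
     (simp_all add: pr_tri clinear_add[OF lin_pr_l] clinear_scale[OF lin_pr_l])

lemma tri_mod: "tri (mB b b') a = tri b (tri b' a)"
  by (rule pr_cancel_A) (simp add: pr_tri B.assoc)

lemma lin_triAB_b[lin]: "clinear (triAB a)"
  by (rule clinearI; rule pr_cancel_B)
     (simp_all add: pr_triAB clinear_add[OF lin_pr_r] clinear_scale[OF lin_pr_r])

lemma lin_triAB_a[lin]: "clinear (\<lambda>a. triAB a b)"
  by (rule clinearI; rule pr_cancel_B)
     (simp_all add: pr_triAB clinear_add[OF lin_pr_r] clinear_scale[OF lin_pr_r] add_r scale_r
       clinear_add[OF lin_pr_l] clinear_scale[OF lin_pr_l])

lemma lslice_pr_T1: "lslice (\<lambda>v. pr v b') (T1 a a'') = tri (triAB a'' b') a"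
proof (rule eq_by_right)
  fix c
  have g: "clinear (\<lambda>v. pr v b')" by (rule lin_pr_l)
  have "mA (lslice (\<lambda>v. pr v b') (T1 a a'')) c = lslice (\<lambda>v. pr v b') (rmul1 c (T1 a a''))"
    by (simp add: lslice_rmul1 g)
  also have "\<dots> = lslice (\<lambda>v. pr v b') (rmul2 a'' (T3 a c))" by (simp add: rmul1_T1)
  also have "\<dots> = tapply (\<lambda>p q. cscale (pr (mA q a'') b') p) (T3 a c)"
    unfolding lslice_def by (simp add: tapply_rmul2 cbilinear_lslice_fun[OF g])
  also have "\<dots> = mA (tri (triAB a'' b') a) c" by (simp add: tri_char pr_triAB)
  finally show "mA (lslice (\<lambda>v. pr v b') (T1 a a'')) c = mA (tri (triAB a'' b') a) c" .
qed

lemma triAB_T1: "tapply (\<lambda>p q. mB (triAB (tri q a') b'') p) (B.T1 b c) = triAB (tri c a') (mB b'' b)"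
proof (rule B.eq_by_left)
  fix e
  have g: "clinear (pr a')" by (rule lin_pr_r)
  have BB: "B.tm (B.T2 e b'') (B.T1 b c) = B.rmul2 c (B.T2 e (mB b'' b))"
    by (rule B.tm_eq_r) (simp add: B.T_simps)
  have "mB e (tapply (\<lambda>p q. mB (triAB (tri q a') b'') p) (B.T1 b c))
      = tapply (\<lambda>p q. mB (mB e (triAB (tri q a') b'')) p) (B.T1 b c)"
    by (simp add: clinear_comp_tapply[OF B.lin_r] B.assoc)
  also have "\<dots> = tapply (\<lambda>p q. tapply (\<lambda>r s. cscale (pr a' (mB s q)) (mB r p)) (B.T2 e b'')) (B.T1 b c)"
    by (simp add: triAB_char pr_tri clinear_comp_tapply[OF B.lin_l] B.scale_l)
  also have "\<dots> = tapply (\<lambda>r s. tapply (\<lambda>p q. cscale (pr a' (mB s q)) (mB r p)) (B.T1 b c)) (B.T2 e b'')"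
    by (rule tapply_swap)
  also have "\<dots> = lslice (pr a') (B.tm (B.T2 e b'') (B.T1 b c))"
    by (simp add: B.tm_eq_tapply lslice_tapply g)
  also have "\<dots> = lslice (pr a') (B.rmul2 c (B.T2 e (mB b'' b)))" by (simp add: BB)
  also have "\<dots> = tapply (\<lambda>r s. cscale (pr a' (mB s c)) r) (B.T2 e (mB b'' b))"
    unfolding lslice_def by (simp add: B.tapply_rmul2 cbilinear_lslice_fun[OF g])
  also have "\<dots> = mB e (triAB (tri c a') (mB b'' b))" by (simp add: triAB_char pr_tri)
  finally show "mB e (tapply (\<lambda>p q. mB (triAB (tri q a') b'') p) (B.T1 b c)) = mB e (triAB (tri c a') (mB b'' b))" .
qed

lemma T1_tri_compat: "tapply (\<lambda>u v. tprod u (tri b v)) (T1 a (tri c a')) = tapply (\<lambda>p q. T1 (tri p a) (tri q a')) (B.T1 b c)"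
  (is "?Z1 = ?Z2")
proof (rule tensor_eq_rslices)
  fix f :: "'a \<Rightarrow> complex" assume f: "clinear f"
  show "rslice f ?Z1 = rslice f ?Z2"
  proof (rule pr_cancel_A)
    fix b''
    have g: "clinear (\<lambda>v. pr v b'')" by (rule lin_pr_l)
    have sw: "pr (rslice f Z) b'' = f (lslice (\<lambda>v. pr v b'') Z)" for Z
      using lslice_rslice_swap[OF f g] by simp
    have "lslice (\<lambda>v. pr v b'') ?Z1 = lslice (\<lambda>v. pr v (mB b'' b)) (T1 a (tri c a'))"
      unfolding lslice_def by (simp add: tapply_tapply[OF cbilinear_lslice_fun[OF g]] lin pr_tri)
    also have "\<dots> = tri (triAB (tri c a') (mB b'' b)) a" by (rule lslice_pr_T1)
    also have "\<dots> = tri (tapply (\<lambda>p q. mB (triAB (tri q a') b'') p) (B.T1 b c)) a" by (simp add: triAB_T1)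
    also have "\<dots> = tapply (\<lambda>p q. tri (triAB (tri q a') b'') (tri p a)) (B.T1 b c)"
      by (simp add: clinear_comp_tapply[OF lin_tri_b] tri_mod)
    also have "\<dots> = lslice (\<lambda>v. pr v b'') ?Z2"
      by (simp add: lslice_tapply g lslice_pr_T1)
    finally show "pr (rslice f ?Z1) b'' = pr (rslice f ?Z2) b''" by (simp add: sw)
  qed
qed

abbreviation "SA \<equiv> smash_act mA \<Delta>A pr"

lemma SA_eq_tapply: "SA b X = tapply (\<lambda>x a. tprod x (tri b a)) X" by (simp add: smash_act_def)
lemma bil_SA_inner[lin, simp]: "cbilinear (\<lambda>x a. tprod x (tri b a))" by (intro cbilinearI lin)
lemma lin_SA_X[lin]: "clinear (SA b)" unfolding SA_eq_tapply by (intro lin)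
lemma lin_SA_b[lin]: "clinear (\<lambda>b. SA b X)" unfolding SA_eq_tapply by (intro clinear_tapply_param lin)
lemma SA_tprod: "SA b (tprod x a) = tprod x (tri b a)" by (simp add: SA_eq_tapply)
lemma bil_SA: "cbilinear SA" by (intro cbilinearI lin_SA_X lin_SA_b)
lemma SA_mult: "SA (mB b b') X = SA b (SA b' X)"
  by (simp add: SA_eq_tapply tapply_tapply tri_mod)
lemma SA_left_module: "left_module mB SA"
  unfolding left_module_def using bil_SA SA_mult by blast

lemma SA_unital: "unital_action SA"
  unfolding unital_action_def
proof
  fix X
  have "\<exists>ps. tsum xs = (\<Sum>(b, Y)\<leftarrow>ps. SA b Y)" for xs
  proof (induction xs)
    case Nil
    then show ?case by (intro exI[of _ "[]"]) (simp add: tsum_Nil)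
  next
    case (Cons p xs)
    obtain x a where p: "p = (x, a)" by fastforce
    obtain ps where ps: "tsum xs = (\<Sum>(b, Y)\<leftarrow>ps. SA b Y)" using Cons by blast
    obtain qs where qs: "a = (\<Sum>(b, a')\<leftarrow>qs. tri b a')" using tri_unital by blast
    have "tprod x a = (\<Sum>(b, a')\<leftarrow>qs. SA b (tprod x a'))"
      by (simp add: qs clinear_sum_list[OF clinear_tprod_r] split_def SA_tprod)
    also have "\<dots> = (\<Sum>(b, Y)\<leftarrow>map (\<lambda>(b, a'). (b, tprod x a')) qs. SA b Y)"
      by (simp add: o_def split_def)
    finally have "tsum (p # xs) = (\<Sum>(b, Y)\<leftarrow>map (\<lambda>(b, a'). (b, tprod x a')) qs @ ps. SA b Y)"
      by (simp add: p tsum_Cons ps)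
    then show ?case by blast
  qed
  from this[of "trep X"] show "\<exists>ps. X = (\<Sum>(b, Y)\<leftarrow>ps. SA b Y)" by simp
qed

lemma SA_SM_act_tprod:
  "SA b (SM (tprod x a) (SA c (tprod y a'))) = tapply (\<lambda>p q. SM (SA p (tprod x a)) (SA q (tprod y a'))) (B.T1 b c)"
proof -
  have "SA b (SM (tprod x a) (SA c (tprod y a'))) = smash_term x y (tapply (\<lambda>u v. tprod u (tri b v)) (T1 a (tri c a')))"
    by (simp add: SA_tprod SM_tprod_smash_term SA_eq_tapply smash_term_leg2[OF lin_tri_a])
  also have "\<dots> = smash_term x y (tapply (\<lambda>p q. T1 (tri p a) (tri q a')) (B.T1 b c))"
    by (simp add: T1_tri_compat)
  also have "\<dots> = tapply (\<lambda>p q. SM (SA p (tprod x a)) (SA q (tprod y a'))) (B.T1 b c)"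
    by (simp add: clinear_comp_tapply[OF lin_smash_term] SA_tprod SM_tprod_smash_term)
  finally show ?thesis .
qed

lemma SA_SM_act: "SA b (SM X (SA c Y)) = tapply (\<lambda>p q. SM (SA p X) (SA q Y)) (B.T1 b c)"
proof -
  have tprod_case: "SA b (SM (tprod x a) (SA c Y)) = tapply (\<lambda>p q. SM (SA p (tprod x a)) (SA q Y)) (B.T1 b c)" for x a
    by (rule tensor_clinear_eqI[OF clinear_comp[OF lin_SA_X clinear_comp[OF lin_SM_r lin_SA_X]]])
       (intro clinear_tapply_param clinear_comp[OF lin_SM_r lin_SA_X], rule SA_SM_act_tprod)
  show ?thesis
    by (rule tensor_clinear_eqI[OF clinear_comp[OF lin_SA_X lin_SM_l]])
       (intro clinear_tapply_param clinear_comp[OF lin_SM_l lin_SA_X], rule tprod_case)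
qed

lemma SA_SM: "SA b (SM X (\<Sum>(c, Y)\<leftarrow>cs. SA c Y)) = (\<Sum>(c, Y)\<leftarrow>cs. tapply (\<lambda>p q. SM (SA p X) (SA q Y)) (B.T1 b c))"
  by (simp add: clinear_sum_list[OF lin_SM_r] clinear_sum_list[OF lin_SA_X] split_def SA_SM_act)

theorem smash_module_algebra: "module_algebra mB \<Delta>B SM SA"
  unfolding module_algebra_def using SM_is_alg SM_nondeg SA_left_module SA_unital SA_SM by blast

end

theorem proposition7p2:
  fixes mA :: "'a::cvec \<Rightarrow> 'a \<Rightarrow> 'a" and \<Delta>A :: "'a comult"
    and mB :: "'b::cvec \<Rightarrow> 'b \<Rightarrow> 'b" and \<Delta>B :: "'b comult"
    and pr :: "'a \<Rightarrow> 'b \<Rightarrow> complex"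
    and mR :: "'r::cvec \<Rightarrow> 'r \<Rightarrow> 'r" and act :: "'a \<Rightarrow> 'r \<Rightarrow> 'r"
  assumes "regular_mha mA \<Delta>A" and "regular_mha mB \<Delta>B"
    and "dual_pair mA \<Delta>A mB \<Delta>B pr"
    and "module_algebra mA \<Delta>A mR act"
  shows "module_algebra mB \<Delta>B (smash_mult mA \<Delta>A mR act) (smash_act mA \<Delta>A pr)"
proof -
  interpret paired_module_alg mA \<Delta>A mR act mB \<Delta>B pr
    by (unfold_locales) (use assms in \<open>simp_all add: mult_hopf_def module_alg_axioms_def paired_module_alg_axioms_def\<close>)
  show ?thesis by (rule smash_module_algebra)
qed

end
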